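(* Let $(D,x,y)$ be a decorated resolution configuration, let $Z_1\in Z(D)$ be a leaf of $D$, and let $A_1\in A(D)$ be the arc one of whose endpoints lies on $Z_1$. Let $Z_2\in Z(D)$ be the circle containing the other endpoint of $A_1$, let $Z_1^*\in Z(s(D))$ be the circle containing both endpoints of the dual arc $A_1^*$, and let $Z_2^*$ be the unique circle of $Z(s_{A(D)\setminus\{A_1\}}(D))\setminus\{Z_1\}$ containing an endpoint of $A_1$. Let $D'$ be obtained from $D$ by deleting $Z_1$ and $A_1$, and let $(D',x',y')$ be the decorated resolution configuration with $y'$ induced from $y$ on $Z(D')$, $x'$ induced from $x$ on $Z(s(D'))\setminus\{Z_2^*\}=Z(s(D))\setminus\{Z_1^*\}$, and $x'(Z_2^* )=x(Z_1^* )$ if $y(Z_1)=x_+$, and $x'(Z_2^* )=x_+$ otherwise. Then $P(D,x,y)\cong P(D',x',y')\times\{0,1\}$, where $\{0,1\}$ is the two-element poset with $0\prec 1$.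
   Context: A resolution configuration $D=(Z(D),A(D))$ consists of a finite set $Z(D)$ of circles immersed in $S^2$ (union has only transverse double points) and a finite totally ordered set $A(D)$ of disjoint embedded arcs meeting the circles exactly in their endpoints. Surgery $s_A(D)$ along $A$: in a small disk around $A$ meeting the circles in segments $\alpha$ (ends $z,w$) and $\beta$ (ends $x,y$), $z,x$ on one side of $A$, replace $\alpha\cup\beta$ by strands $z$–$y$ and $x$–$w$ crossing once; arcs become $A(D)\setminus\{A\}$; $s_{A'}(D)$ for $A'\subseteq A(D)$, $s(D)=s_{A(D)}(D)$. $A$ is an $\eta$-, $\Delta$-, or $m$-arc according as surgery changes the number of circles by $0$, $+1$, $-1$. The graph $G(D)$ has a vertex for each circle and an edge for each arc (joining the circles containing its endpoints). A leaf of $D$ is a circle whose vertex has degree $1$ in $G(D)$. The dual arc $A^*$ of $A\in A(D)$ is a small arc parallel to $A$ whose endpoints lie on the two strands created by surgery along $A$ (so it is an arc of the dual configuration with circles $Z(s(D))$). Labeled configurations, the partial order $\prec$, decorated configurations and $P(D,x,y)$: a labeling assigns $x_+$ or $x_-$ to each circle; $(E,y)\prec(D,x)$ is generated by: $D=s_A(E)$ for a single arc $A$, $x,y$ agree on circles not meeting $\partial A$, and for a $\Delta$-arc splitting $Z_i$ into $Z_j,Z_k$: $y(Z_i)=x(Z_j)=x(Z_k)=x_-$ or ($y(Z_i)=x_+$, $\{x(Z_j),x(Z_k)\}=\{x_+,x_-\}$); for an $m$-arc merging $Z_i,Z_j$ into $Z_k$: $y(Z_i)=y(Z_j)=x(Z_k)=x_+$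 or ($\{y(Z_i),y(Z_j)\}=\{x_+,x_-\}$, $x(Z_k)=x_-$); no relation for $\eta$-arcs; then take transitive closure. A decorated resolution configuration $(D,x,y)$ has $x$ labeling $Z(s(D))$, $y$ labeling $Z(D)$, $(D,y)\preceq(s(D),x)$, and $P(D,x,y)=\{(E,z):(D,y)\preceq(E,z)\preceq(s(D),x)\}$. *)

theory Defs
  imports Main "HOL-Library.FuncSet"
begin

text \<open>
A configuration consists of a finite set of marked points lying on the circles;
the circles are the cycles of the permutation nxt (each circle is oriented and
nxt r is the next marked point along the circle after r).  lft r records whether
the arc at r leaves the circle on the left of its orientation (w.r.t. the
orientation of the sphere).  arcs is a set of pairwise disjoint two-element
sets of marked points (the endpoints of the arcs).  Marked points not on any
arc are plain markers (needed so that arc-free circles are represented).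
\<close>

record 'p rconf =
  pts  :: "'p set"
  nxt  :: "'p \<Rightarrow> 'p"
  lft  :: "'p \<Rightarrow> bool"
  arcs :: "'p set set"

definition wf_conf :: "'p rconf \<Rightarrow> bool" where
  "wf_conf D \<longleftrightarrow> finite (pts D) \<and> bij_betw (nxt D) (pts D) (pts D)
     \<and> (\<forall>A\<in>arcs D. card A = 2 \<and> A \<subseteq> pts D)
     \<and> (\<forall>A\<in>arcs D. \<forall>A'\<in>arcs D. A \<noteq> A' \<longrightarrow> A \<inter> A' = {})"

text \<open>Nodes are ends of strands at marked points: (r,False) is the strand end
just before r, (r,True) the strand end just after r (along the orientation).
The edges of s_B(D): the circle segments between consecutive marked points,
the local strand through r if r is not an endpoint of a surgered arc, and for a
surgered arc {p,q} the two new strands z--y, x--w (crossing once).\<close>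

type_synonym 'p node = "'p \<times> bool"

definition sedges :: "'p rconf \<Rightarrow> 'p set set \<Rightarrow> ('p node \<times> 'p node) set" where
  "sedges D B =
     {((r,True),(nxt D r,False)) | r. r \<in> pts D}
   \<union> {((r,False),(r,True)) | r. r \<in> pts D \<and> r \<notin> \<Union>B}
   \<union> {((p,False),(q,False)) | p q. {p,q} \<in> B \<and> p \<noteq> q \<and> lft D p = lft D q}
   \<union> {((p,True),(q,True)) | p q. {p,q} \<in> B \<and> p \<noteq> q \<and> lft D p = lft D q}
   \<union> {((p,False),(q,True)) | p q. {p,q} \<in> B \<and> p \<noteq> q \<and> lft D p \<noteq> lft D q}"

definition circles :: "'p rconf \<Rightarrow> 'p set set \<Rightarrow> 'p node set set" where
  "circles D B = {{m. (n,m) \<in> (sedges D B \<union> (sedges D B)\<inverse>)\<^sup>*} | n. n \<in> pts D \<times> UNIV}"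

definition on_circle :: "'p \<Rightarrow> 'p node set \<Rightarrow> bool" where
  "on_circle r C \<longleftrightarrow> (r,True) \<in> C"

definition meets :: "'p node set \<Rightarrow> 'p set \<Rightarrow> bool" where
  "meets C A \<longleftrightarrow> (\<exists>r\<in>A. \<exists>s. (r,s) \<in> C)"

datatype lab = xplus | xminus

text \<open>Labeled configurations (s_B(D), l) with B \<subseteq> A(D); the generating
relation of the partial order: (s_B(D),l) \<prec> (s_{B \<union> {A}}(D), l').\<close>
definition delta_rel :: "'p rconf \<Rightarrow> 'p set set \<Rightarrow> ('p node set \<Rightarrow> lab) \<Rightarrow> 'p set set
                          \<Rightarrow> ('p node set \<Rightarrow> lab) \<Rightarrow> 'p set \<Rightarrow> bool" where
  "delta_rel D B l B' l' A \<longleftrightarrow>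
     card (circles D B') = card (circles D B) + 1 \<and>
     (\<exists>Zi Zj Zk. {C\<in>circles D B. meets C A} = {Zi} \<and> {C\<in>circles D B'. meets C A} = {Zj,Zk}
        \<and> Zj \<noteq> Zk \<and>
        ((l Zi = xminus \<and> l' Zj = xminus \<and> l' Zk = xminus) \<or>
         (l Zi = xplus \<and> {l' Zj, l' Zk} = {xplus, xminus})))"

definition m_rel :: "'p rconf \<Rightarrow> 'p set set \<Rightarrow> ('p node set \<Rightarrow> lab) \<Rightarrow> 'p set set
                          \<Rightarrow> ('p node set \<Rightarrow> lab) \<Rightarrow> 'p set \<Rightarrow> bool" where
  "m_rel D B l B' l' A \<longleftrightarrow>
     card (circles D B') + 1 = card (circles D B) \<and>
     (\<exists>Zi Zj Zk. {C\<in>circles D B. meets C A} = {Zi,Zj} \<and> Zi \<noteq> Zj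
        \<and> {C\<in>circles D B'. meets C A} = {Zk} \<and>
        ((l Zi = xplus \<and> l Zj = xplus \<and> l' Zk = xplus) \<or>
         ({l Zi, l Zj} = {xplus, xminus} \<and> l' Zk = xminus)))"

definition step :: "'p rconf \<Rightarrow> ('p set set \<times> ('p node set \<Rightarrow> lab))
                     \<Rightarrow> ('p set set \<times> ('p node set \<Rightarrow> lab)) \<Rightarrow> bool" where
  "step D E F \<longleftrightarrow> (case E of (B,l) \<Rightarrow> case F of (B',l') \<Rightarrow>
     B \<subseteq> arcs D \<and> l \<in> extensional (circles D B) \<and> l' \<in> extensional (circles D B') \<and>
     (\<exists>A \<in> arcs D - B. B' = insert A B \<and>
        (\<forall>C\<in>circles D B. \<not> meets C A \<longrightarrow> C \<in> circles D B' \<and> l' C = l C) \<and>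
        (delta_rel D B l B' l' A \<or> m_rel D B l B' l' A)))"

definition leq :: "'p rconf \<Rightarrow> ('p set set \<times> ('p node set \<Rightarrow> lab))
                     \<Rightarrow> ('p set set \<times> ('p node set \<Rightarrow> lab)) \<Rightarrow> bool" where
  "leq D = (step D)\<^sup>*\<^sup>*"

definition decorated :: "'p rconf \<Rightarrow> ('p node set \<Rightarrow> lab) \<Rightarrow> ('p node set \<Rightarrow> lab) \<Rightarrow> bool" where
  "decorated D x y \<longleftrightarrow> wf_conf D \<and> y \<in> extensional (circles D {})
     \<and> x \<in> extensional (circles D (arcs D)) \<and> leq D ({}, y) (arcs D, x)"

definition Ppos :: "'p rconf \<Rightarrow> ('p node set \<Rightarrow> lab) \<Rightarrow> ('p node set \<Rightarrow> lab)
                     \<Rightarrow> ('p set set \<times> ('p node set \<Rightarrow> lab)) set" where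
  "Ppos D x y = {e. leq D ({}, y) e \<and> leq D e (arcs D, x)}"

definition deg :: "'p rconf \<Rightarrow> 'p node set \<Rightarrow> nat" where
  "deg D Z = card {A\<in>arcs D. card {r\<in>A. on_circle r Z} = 1}
           + 2 * card {A\<in>arcs D. \<forall>r\<in>A. on_circle r Z}"

definition leaf :: "'p rconf \<Rightarrow> 'p node set \<Rightarrow> bool" where
  "leaf D Z \<longleftrightarrow> Z \<in> circles D {} \<and> deg D Z = 1"

text \<open>Z(s(D)) circle containing both endpoints of the dual arc of A, i.e. both
strands created by surgery along A.\<close>
definition dual_arc_circle :: "'p set \<Rightarrow> 'p node set \<Rightarrow> bool" where
  "dual_arc_circle A C \<longleftrightarrow> (\<forall>r\<in>A. \<forall>s. (r,s) \<in> C)"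

definition delete_circ_arc :: "'p rconf \<Rightarrow> 'p node set \<Rightarrow> 'p set \<Rightarrow> 'p rconf" where
  "delete_circ_arc D Z A = D\<lparr>pts := {r\<in>pts D. \<not> on_circle r Z}, arcs := arcs D - {A}\<rparr>"

definition order_iso_betw where
  "order_iso_betw le1 S le2 T f \<longleftrightarrow> bij_betw f S T \<and>
     (\<forall>a\<in>S. \<forall>b\<in>S. le1 a b \<longleftrightarrow> le2 (f a) (f b))"

end

theory Submission
  imports Defs "HOL-Combinatorics.Cycles"
begin

text \<open>
  Write \<open>A'\<close> for the arcs other than \<open>A1\<close>. For \<open>B \<subseteq> A'\<close> the leaf \<open>Z1\<close> is untouched by surgery, so the
  circles of \<open>s\<^sub>B(D)\<close> are \<open>Z1\<close> together with those of \<open>s\<^sub>B(D')\<close>; surgery along \<open>A1\<close> as well merges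
  \<open>Z1\<close> with the circle of \<open>s\<^sub>B(D')\<close> through the other endpoint \<open>q\<close> of \<open>A1\<close> and changes nothing else.
  So an element \<open>(B, l)\<close> of \<open>P(D,x,y)\<close> is described by \<open>B - {A1}\<close>, by whether \<open>A1 \<in> B\<close>, and by a
  labelling of \<open>s\<^bsub>B - {A1}\<^esub>(D')\<close>: before \<open>A1\<close> is surgered \<open>Z1\<close> keeps its label \<open>y(Z1)\<close>; afterwards the
  label of the merged circle is carried by the circle through \<open>q\<close>, except that for \<open>y(Z1) = x\<^sub>-\<close> the
  merged circle is forced to be \<open>x\<^sub>-\<close> and the circle through \<open>q\<close> must have been \<open>x\<^sub>+\<close>. Under this
  dictionary the moves along arcs of \<open>A'\<close> are exactly the moves of \<open>P(D',x',y')\<close>, and the move along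
  \<open>A1\<close> is the step \<open>0 \<prec> 1\<close> of the second factor.
\<close>

section \<open>Connected components of an undirected graph\<close>

definition component_of :: "('a \<times> 'a) set \<Rightarrow> 'a \<Rightarrow> 'a set" where
  "component_of E n = {m. (n,m) \<in> (E \<union> E\<inverse>)\<^sup>*}"

lemma symcl_rtrancl_sym: "(a,b) \<in> (E \<union> E\<inverse>)\<^sup>* \<Longrightarrow> (b,a) \<in> (E \<union> E\<inverse>)\<^sup>*"
  by (rule symD[OF sym_rtrancl[OF sym_Un_converse]])

lemma symcl_rtrancl_mono: "E \<subseteq> F \<Longrightarrow> (a,b) \<in> (E \<union> E\<inverse>)\<^sup>* \<Longrightarrow> (a,b) \<in> (F \<union> F\<inverse>)\<^sup>*"
  by (metis Un_mono converse_mono rtrancl_mono subsetD)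

lemma component_of_self [simp]: "n \<in> component_of E n"
  by (simp add: component_of_def)

lemma component_of_eq: "m \<in> component_of E n \<Longrightarrow> component_of E m = component_of E n"
  unfolding component_of_def by (auto intro: rtrancl_trans symcl_rtrancl_sym)

lemma component_of_eq_if_inter:
  "component_of E a \<inter> component_of E b \<noteq> {} \<Longrightarrow> component_of E a = component_of E b"
  by (metis component_of_eq disjoint_iff)

lemma component_of_disjoint: "n \<notin> component_of E c \<Longrightarrow> component_of E n \<inter> component_of E c = {}"
  using component_of_eq_if_inter[of E n c] component_of_self[of n E] by blast

lemma component_of_edge_iff: "(a,b) \<in> E \<Longrightarrow> a \<in> component_of E n \<longleftrightarrow> b \<in> component_of E n"
  unfolding component_of_def by (auto intro: rtrancl_into_rtrancl)

lemma component_of_edge_fw: "(a,b) \<in> E \<Longrightarrow> a \<in> component_of E n \<Longrightarrow> b \<in> component_of E n"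
  and component_of_edge_bw: "(a,b) \<in> E \<Longrightarrow> b \<in> component_of E n \<Longrightarrow> a \<in> component_of E n"
  using component_of_edge_iff[of a b E n] by simp_all

lemma symcl_rtrancl_restrict:
  assumes "(n,m) \<in> (E \<union> E\<inverse>)\<^sup>*" "\<forall>(a,b)\<in>E. a \<in> V \<longleftrightarrow> b \<in> V" "n \<in> V"
  shows "m \<in> V \<and> (n,m) \<in> (Restr E V \<union> (Restr E V)\<inverse>)\<^sup>*"
  using assms(1)
proof (induction rule: rtrancl_induct)
  case base
  show ?case using assms(3) by simp
next
  case (step u w)
  then have "w \<in> V" using assms(2) by blast
  with step have "(u,w) \<in> Restr E V \<union> (Restr E V)\<inverse>" by auto
  with step.IH \<open>w \<in> V\<close> show ?case by (meson rtrancl.rtrancl_into_rtrancl)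
qed

lemma component_of_subset_closed:
  assumes "\<forall>(a,b)\<in>E. a \<in> V \<longleftrightarrow> b \<in> V" "n \<in> V"
  shows "component_of E n \<subseteq> V"
  using symcl_rtrancl_restrict[OF _ assms] by (auto simp: component_of_def)

lemma component_of_image_diff:
  assumes "c \<in> V"
  shows "component_of E ` (V - component_of E c) = component_of E ` V - {component_of E c}"
proof (intro equalityI subsetI)
  fix C assume "C \<in> component_of E ` (V - component_of E c)"
  then obtain n where n: "n \<in> V" "n \<notin> component_of E c" "C = component_of E n" by blast
  then have "C \<noteq> component_of E c" using component_of_self[of n E] by blast
  with n show "C \<in> component_of E ` V - {component_of E c}" by blast
next
  fix C assume "C \<in> component_of E ` V - {component_of E c}"
  then obtain n where n: "n \<in> V" "C = component_of E n" "C \<noteq> component_of E c" by blast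
  then have "n \<notin> component_of E c" using component_of_eq[of n E c] by blast
  with n show "C \<in> component_of E ` (V - component_of E c)" by blast
qed

lemma component_of_cong_outside:
  assumes diff: "sym_diff E F \<subseteq> K \<times> K" and disj: "component_of E n \<inter> K = {}"
  shows "component_of F n = component_of E n"
proof
  let ?V = "component_of E n"
  have "\<forall>(a,b)\<in>F. a \<in> ?V \<longleftrightarrow> b \<in> ?V"
  proof clarify
    fix a b assume "(a,b) \<in> F"
    then show "a \<in> ?V \<longleftrightarrow> b \<in> ?V"
      using component_of_edge_iff[of a b E n] diff disj by (cases "(a,b) \<in> E") auto
  qed
  then show "component_of F n \<subseteq> ?V" by (rule component_of_subset_closed) simp
  show "?V \<subseteq> component_of F n"
  proof
    fix m assume "m \<in> ?V"
    then have "(n,m) \<in> (Restr E ?V \<union> (Restr E ?V)\<inverse>)\<^sup>*"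
      using symcl_rtrancl_restrict[of n m E ?V] component_of_edge_iff[of _ _ E n]
      by (auto simp: component_of_def)
    moreover have "Restr E ?V \<subseteq> F" using diff disj by blast
    ultimately have "(n,m) \<in> (F \<union> F\<inverse>)\<^sup>*" by (rule symcl_rtrancl_mono[rotated])
    then show "m \<in> component_of F n" by (simp add: component_of_def)
  qed
qed

lemma symcl_rtrancl_last_cut:
  assumes "(a,n) \<in> (E \<union> E\<inverse>)\<^sup>*" "X \<subseteq> K \<times> K"
  shows "\<exists>a'\<in>insert a K. (a',n) \<in> ((E - X) \<union> (E - X)\<inverse>)\<^sup>*"
  using assms(1)
proof (induction rule: rtrancl_induct)
  case base
  then show ?case by blast
next
  case (step u w)
  show ?case
  proof (cases "(u,w) \<in> X \<or> (w,u) \<in> X")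
    case True
    then have "w \<in> K" using assms(2) by blast
    then show ?thesis by blast
  next
    case False
    then have "(u,w) \<in> (E - X) \<union> (E - X)\<inverse>" using step.hyps(2) by auto
    then show ?thesis using step.IH by (meson rtrancl.rtrancl_into_rtrancl)
  qed
qed

lemma component_of_subset_after_cut:
  assumes cut: "X \<subseteq> K \<times> K"
    and kept: "Restr (F - X) (component_of F a) \<subseteq> E"
    and reach: "insert a K \<subseteq> component_of E b"
  shows "component_of F a \<subseteq> component_of E b"
proof
  let ?V = "component_of F a"
  fix n assume n: "n \<in> ?V"
  then have "(a,n) \<in> (F \<union> F\<inverse>)\<^sup>*" by (simp add: component_of_def)
  then obtain a' where a': "a' \<in> insert a K" "(a',n) \<in> ((F - X) \<union> (F - X)\<inverse>)\<^sup>*"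
    using symcl_rtrancl_last_cut[OF _ cut] by blast
  have "\<forall>(u,v)\<in>F - X. u \<in> ?V \<longleftrightarrow> v \<in> ?V" using component_of_edge_iff[of _ _ F a] by blast
  from symcl_rtrancl_restrict[OF symcl_rtrancl_sym[OF a'(2)] this n]
  have "(n,a') \<in> (Restr (F - X) ?V \<union> (Restr (F - X) ?V)\<inverse>)\<^sup>*" ..
  then have "(n,a') \<in> (E \<union> E\<inverse>)\<^sup>*" by (rule symcl_rtrancl_mono[OF kept])
  then have "n \<in> component_of E a'"
    by (simp add: component_of_def symcl_rtrancl_sym)
  moreover have "component_of E a' = component_of E b"
    using reach a'(1) by (intro component_of_eq) blast
  ultimately show "n \<in> component_of E b" by simp
qed

section \<open>Circles of a partial resolution\<close>

lemma circles_eq_image: "circles D B = component_of (sedges D B) ` (pts D \<times> UNIV)"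
  unfolding circles_def component_of_def by auto

lemma circle_eq_component: "C \<in> circles D B \<Longrightarrow> n \<in> C \<Longrightarrow> C = component_of (sedges D B) n"
  unfolding circles_eq_image using component_of_eq by fastforce

lemma component_in_circles: "n \<in> pts D \<times> UNIV \<Longrightarrow> component_of (sedges D B) n \<in> circles D B"
  unfolding circles_eq_image by blast

lemma finite_circles: "finite (pts D) \<Longrightarrow> finite (circles D B)"
  unfolding circles_eq_image by simp

lemma sedges_in_pts:
  assumes "wf_conf D" "B \<subseteq> arcs D" "(a,b) \<in> sedges D B"
  shows "a \<in> pts D \<times> UNIV \<and> b \<in> pts D \<times> UNIV"
proof -
  have "r \<in> pts D \<Longrightarrow> nxt D r \<in> pts D" for r
    using assms(1) unfolding wf_conf_def bij_betw_def by blast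
  moreover have "{u,v} \<in> B \<Longrightarrow> u \<in> pts D \<and> v \<in> pts D" for u v
    using assms(1,2) unfolding wf_conf_def by blast
  ultimately show ?thesis using assms(3) unfolding sedges_def by auto
qed

lemma circles_subset_nodes:
  "wf_conf D \<Longrightarrow> B \<subseteq> arcs D \<Longrightarrow> C \<in> circles D B \<Longrightarrow> C \<subseteq> pts D \<times> UNIV"
  unfolding circles_eq_image using sedges_in_pts
  by (smt (verit, best) case_prodI2 component_of_subset_closed imageE)

lemma sedges_circle_edge: "r \<in> pts D \<Longrightarrow> ((r,True),(nxt D r,False)) \<in> sedges D B"
  unfolding sedges_def by blast

lemma sedges_local_edge: "r \<in> pts D \<Longrightarrow> r \<notin> \<Union>B \<Longrightarrow> ((r,False),(r,True)) \<in> sedges D B"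
  unfolding sedges_def by blast

lemma sedges_arc_edges:
  assumes "{u,v} \<in> B" "u \<noteq> v"
  shows "(lft D u = lft D v \<and> ((u,False),(v,False)) \<in> sedges D B \<and> ((u,True),(v,True)) \<in> sedges D B) \<or>
    (lft D u \<noteq> lft D v \<and> ((u,False),(v,True)) \<in> sedges D B \<and> ((v,False),(u,True)) \<in> sedges D B)"
proof -
  have "{v,u} \<in> B" using assms(1) by (simp add: insert_commute)
  then show ?thesis using assms unfolding sedges_def by (cases "lft D u = lft D v") blast+
qed

lemma sedges_sym_diff:
  assumes "Ba \<subseteq> Bb"
  shows "sym_diff (sedges D Ba) (sedges D Bb) \<subseteq> (\<Union>(Bb - Ba) \<times> UNIV) \<times> (\<Union>(Bb - Ba) \<times> UNIV)"
proof
  fix e assume e: "e \<in> sym_diff (sedges D Ba) (sedges D Bb)"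
  have "\<exists>r. r \<in> \<Union>Bb \<and> r \<notin> \<Union>Ba \<and> e = ((r,False),(r,True))" if "e \<in> sedges D Ba - sedges D Bb"
    using that assms unfolding sedges_def by blast
  moreover have "\<exists>u v. {u,v} \<in> Bb - Ba \<and>
      (e = ((u,False),(v,False)) \<or> e = ((u,True),(v,True)) \<or> e = ((u,False),(v,True)))"
    if "e \<in> sedges D Bb - sedges D Ba"
    using that assms unfolding sedges_def by blast
  ultimately show "e \<in> (\<Union>(Bb - Ba) \<times> UNIV) \<times> (\<Union>(Bb - Ba) \<times> UNIV)"
    using e by blast
qed

lemma sedges_lost_edge:
  "Ba \<subseteq> Bb \<Longrightarrow> e \<in> sedges D Ba - sedges D Bb \<Longrightarrow> \<exists>r\<in>\<Union>Bb - \<Union>Ba. e = ((r,False),(r,True))"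
  unfolding sedges_def by blast

lemma sedges_insert_sym_diff:
  "sym_diff (sedges D B) (sedges D (insert A B)) \<subseteq> (A \<times> UNIV) \<times> (A \<times> UNIV)"
  using sedges_sym_diff[of B "insert A B" D] by blast

lemma meets_iff: "meets C A \<longleftrightarrow> C \<inter> (A \<times> UNIV) \<noteq> {}"
  unfolding meets_def by auto

lemma circles_insert_iff_not_meets:
  assumes "\<not> meets C A"
  shows "C \<in> circles D (insert A B) \<longleftrightarrow> C \<in> circles D B"
proof -
  have same: "component_of (sedges D B2) n = C"
    if "C = component_of (sedges D B1) n" "sym_diff (sedges D B1) (sedges D B2) \<subseteq> (A \<times> UNIV) \<times> (A \<times> UNIV)"
    for n B1 B2
    using component_of_cong_outside[OF that(2)] that(1) assms by (auto simp: meets_iff)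
  have "sym_diff (sedges D (insert A B)) (sedges D B) \<subseteq> (A \<times> UNIV) \<times> (A \<times> UNIV)"
    using sedges_insert_sym_diff[of D B A] by blast
  from same[OF _ this] same[OF _ sedges_insert_sym_diff] show ?thesis
    unfolding circles_eq_image by blast
qed

lemma inj_on_funpow_returns:
  assumes "finite S" "inj_on f S" "f ` S \<subseteq> S" "x \<in> S"
  obtains n where "0 < n" "(f ^^ n) x = x"
proof -
  have it: "(f ^^ k) z \<in> S" if "z \<in> S" for k z using that assms(3) by (induction k) auto
  have cancel: "(f ^^ i) u = (f ^^ i) v \<Longrightarrow> u \<in> S \<Longrightarrow> v \<in> S \<Longrightarrow> u = v" for i u v
  proof (induction i)
    case 0
    then show ?case by simp
  next
    case (Suc i)
    then have "(f ^^ i) u = (f ^^ i) v" using assms(2) it unfolding inj_on_def by simp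
    then show ?case using Suc by blast
  qed
  have "\<not> inj_on (\<lambda>k. (f ^^ k) x) {..card S}"
  proof
    assume "inj_on (\<lambda>k. (f ^^ k) x) {..card S}"
    moreover have "(\<lambda>k. (f ^^ k) x) ` {..card S} \<subseteq> S" using it assms(4) by auto
    ultimately have "card {..card S} \<le> card S" using card_inj_on_le assms(1) by blast
    then show False by simp
  qed
  then obtain i j where ij: "i < j" "(f ^^ i) x = (f ^^ j) x"
    unfolding inj_on_def by (metis linorder_neqE_nat)
  then have "(f ^^ i) ((f ^^ (j - i)) x) = (f ^^ i) x"
    by (metis funpow_add le_add_diff_inverse less_imp_le comp_apply)
  then have "(f ^^ (j - i)) x = x" using cancel it assms(4) by blast
  then show ?thesis using that[of "j - i"] ij(1) by simp
qed

section \<open>The labelling rules of split and merge moves\<close>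

definition delta_labels :: "'c set \<Rightarrow> 'c set \<Rightarrow> ('c \<Rightarrow> lab) \<Rightarrow> ('c \<Rightarrow> lab) \<Rightarrow> bool" where
  "delta_labels S S2 l l2 \<longleftrightarrow> (\<exists>Zi Zj Zk. S = {Zi} \<and> S2 = {Zj,Zk} \<and> Zj \<noteq> Zk \<and>
        ((l Zi = xminus \<and> l2 Zj = xminus \<and> l2 Zk = xminus) \<or>
         (l Zi = xplus \<and> {l2 Zj, l2 Zk} = {xplus, xminus})))"

definition m_labels :: "'c set \<Rightarrow> 'c set \<Rightarrow> ('c \<Rightarrow> lab) \<Rightarrow> ('c \<Rightarrow> lab) \<Rightarrow> bool" where
  "m_labels S S2 l l2 \<longleftrightarrow> (\<exists>Zi Zj Zk. S = {Zi,Zj} \<and> Zi \<noteq> Zj \<and> S2 = {Zk} \<and>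
        ((l Zi = xplus \<and> l Zj = xplus \<and> l2 Zk = xplus) \<or>
         ({l Zi, l Zj} = {xplus, xminus} \<and> l2 Zk = xminus)))"

lemma lab_pair_iff: "{a,b} = {xplus,xminus} \<longleftrightarrow> (a = xplus \<and> b = xminus) \<or> (a = xminus \<and> b = xplus)"
  by (cases a; cases b) auto

lemma lab_neq_iff: "a \<noteq> xplus \<longleftrightarrow> a = xminus" "a \<noteq> xminus \<longleftrightarrow> a = xplus"
  by (cases a; simp)+

lemma delta_rel_iff:
  "delta_rel D B l B' l' A \<longleftrightarrow> card (circles D B') = card (circles D B) + 1 \<and>
    delta_labels {C\<in>circles D B. meets C A} {C\<in>circles D B'. meets C A} l l'"
  unfolding delta_rel_def delta_labels_def by blast

lemma m_rel_iff:
  "m_rel D B l B' l' A \<longleftrightarrow> card (circles D B') + 1 = card (circles D B) \<and>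
    m_labels {C\<in>circles D B. meets C A} {C\<in>circles D B'. meets C A} l l'"
  unfolding m_rel_def m_labels_def by blast

lemma delta_labelsE:
  assumes "delta_labels S S2 l l2"
  obtains Zi Zj Zk where "S = {Zi}" "S2 = {Zj,Zk}" "Zj \<noteq> Zk"
    "(l Zi = xminus \<and> l2 Zj = xminus \<and> l2 Zk = xminus) \<or> (l Zi = xplus \<and> {l2 Zj, l2 Zk} = {xplus, xminus})"
  using assms unfolding delta_labels_def by blast

lemma m_labelsE:
  assumes "m_labels S S2 l l2"
  obtains Zi Zj Zk where "S = {Zi,Zj}" "S2 = {Zk}" "Zi \<noteq> Zj"
    "(l Zi = xplus \<and> l Zj = xplus \<and> l2 Zk = xplus) \<or> ({l Zi, l Zj} = {xplus, xminus} \<and> l2 Zk = xminus)"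
  using assms unfolding m_labels_def by blast

lemma delta_labels_xminus:
  assumes "delta_labels S S2 l l2" "C \<in> S" "l C = xminus" "C2 \<in> S2"
  shows "l2 C2 = xminus"
proof -
  from assms(1) obtain Zi Zj Zk where "S = {Zi}" "S2 = {Zj,Zk}"
    "(l Zi = xminus \<and> l2 Zj = xminus \<and> l2 Zk = xminus) \<or> (l Zi = xplus \<and> {l2 Zj, l2 Zk} = {xplus, xminus})"
    by (rule delta_labelsE)
  with assms(2-4) show ?thesis by auto
qed

lemma m_labels_xminus:
  assumes "m_labels S S2 l l2" "C \<in> S" "l C = xminus" "C2 \<in> S2"
  shows "l2 C2 = xminus"
proof -
  from assms(1) obtain Zi Zj Zk where "S = {Zi,Zj}" "S2 = {Zk}"
    "(l Zi = xplus \<and> l Zj = xplus \<and> l2 Zk = xplus) \<or> ({l Zi, l Zj} = {xplus, xminus} \<and> l2 Zk = xminus)"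
    by (rule m_labelsE)
  with assms(2-4) show ?thesis by auto
qed

lemma delta_labels_cong:
  assumes "\<forall>C\<in>S. l C = l' C" "\<forall>C\<in>S2. l2 C = l2' C"
  shows "delta_labels S S2 l l2 = delta_labels S S2 l' l2'"
  using assms unfolding delta_labels_def by (smt (verit) insertCI)

lemma m_labels_cong:
  assumes "\<forall>C\<in>S. l C = l' C" "\<forall>C\<in>S2. l2 C = l2' C"
  shows "m_labels S S2 l l2 = m_labels S S2 l' l2'"
  using assms unfolding m_labels_def by (smt (verit) insertCI)

lemma delta_labels_imageI:
  assumes "inj_on g S2" "delta_labels S S2 (l \<circ> h) (l2 \<circ> g)"
  shows "delta_labels (h ` S) (g ` S2) l l2"
proof -
  from assms(2) obtain Zi Zj Zk where w: "S = {Zi}" "S2 = {Zj,Zk}" "Zj \<noteq> Zk"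
    "(l (h Zi) = xminus \<and> l2 (g Zj) = xminus \<and> l2 (g Zk) = xminus) \<or>
     (l (h Zi) = xplus \<and> {l2 (g Zj), l2 (g Zk)} = {xplus, xminus})"
    unfolding delta_labels_def by auto
  have "g Zj \<noteq> g Zk" using assms(1) w(2,3) by (auto simp: inj_on_def)
  then show ?thesis
    unfolding delta_labels_def using w by (intro exI[of _ "h Zi"] exI[of _ "g Zj"] exI[of _ "g Zk"]) simp
qed

lemma m_labels_imageI:
  assumes "inj_on h S" "m_labels S S2 (l \<circ> h) (l2 \<circ> g)"
  shows "m_labels (h ` S) (g ` S2) l l2"
proof -
  from assms(2) obtain Zi Zj Zk where w: "S = {Zi,Zj}" "S2 = {Zk}" "Zi \<noteq> Zj"
    "(l (h Zi) = xplus \<and> l (h Zj) = xplus \<and> l2 (g Zk) = xplus) \<or>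
     ({l (h Zi), l (h Zj)} = {xplus, xminus} \<and> l2 (g Zk) = xminus)"
    unfolding m_labels_def by auto
  have "h Zi \<noteq> h Zj" using assms(1) w(1,3) by (auto simp: inj_on_def)
  then show ?thesis
    unfolding m_labels_def using w by (intro exI[of _ "h Zi"] exI[of _ "h Zj"] exI[of _ "g Zk"]) simp
qed

lemma delta_labels_image:
  assumes "inj_on h S" "inj_on g S2"
  shows "delta_labels (h ` S) (g ` S2) l l2 = delta_labels S S2 (l \<circ> h) (l2 \<circ> g)"
proof
  assume "delta_labels S S2 (l \<circ> h) (l2 \<circ> g)"
  then show "delta_labels (h ` S) (g ` S2) l l2" using delta_labels_imageI assms(2) by blast
next
  assume a: "delta_labels (h ` S) (g ` S2) l l2"
  let ?h = "the_inv_into S h" and ?g = "the_inv_into S2 g"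
  have "delta_labels (h ` S) (g ` S2) ((l \<circ> h) \<circ> ?h) ((l2 \<circ> g) \<circ> ?g)"
    using delta_labels_cong[of "h ` S" l "(l \<circ> h) \<circ> ?h" "g ` S2" l2 "(l2 \<circ> g) \<circ> ?g"] a
    by (simp add: f_the_inv_into_f assms)
  then have "delta_labels (?h ` h ` S) (?g ` g ` S2) (l \<circ> h) (l2 \<circ> g)"
    using delta_labels_imageI inj_on_the_inv_into[OF assms(2)] by blast
  then show "delta_labels S S2 (l \<circ> h) (l2 \<circ> g)" by (simp add: the_inv_into_onto assms)
qed

lemma m_labels_image:
  assumes "inj_on h S" "inj_on g S2"
  shows "m_labels (h ` S) (g ` S2) l l2 = m_labels S S2 (l \<circ> h) (l2 \<circ> g)"
proof
  assume "m_labels S S2 (l \<circ> h) (l2 \<circ> g)"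
  then show "m_labels (h ` S) (g ` S2) l l2" using m_labels_imageI assms(1) by blast
next
  assume a: "m_labels (h ` S) (g ` S2) l l2"
  let ?h = "the_inv_into S h" and ?g = "the_inv_into S2 g"
  have "m_labels (h ` S) (g ` S2) ((l \<circ> h) \<circ> ?h) ((l2 \<circ> g) \<circ> ?g)"
    using m_labels_cong[of "h ` S" l "(l \<circ> h) \<circ> ?h" "g ` S2" l2 "(l2 \<circ> g) \<circ> ?g"] a
    by (simp add: f_the_inv_into_f assms)
  then have "m_labels (?h ` h ` S) (?g ` g ` S2) (l \<circ> h) (l2 \<circ> g)"
    using m_labels_imageI inj_on_the_inv_into[OF assms(1)] by blast
  then show "m_labels S S2 (l \<circ> h) (l2 \<circ> g)" by (simp add: the_inv_into_onto assms)
qed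

text \<open>On a circle that survives the move, exchanging \<open>x\<^sub>+\<close> and \<open>x\<^sub>-\<close> both before and after
  preserves validity: the other circle involved is forced to be \<open>x\<^sub>-\<close> in a split and \<open>x\<^sub>+\<close> in a merge.\<close>

lemma delta_labels_flipI:
  assumes "\<forall>C\<in>S. C \<noteq> M0 \<longrightarrow> la C = lb C" "\<forall>C\<in>S2. C \<noteq> M2 \<longrightarrow> la2 C = lb2 C"
    "M0 \<in> S \<longleftrightarrow> M2 \<in> S2" "la M0 \<noteq> lb M0" "la2 M2 \<noteq> lb2 M2" "la M0 = la2 M2"
    "delta_labels S S2 la la2"
  shows "delta_labels S S2 lb lb2"
proof (cases "M0 \<in> S")
  case False
  then have "M2 \<notin> S2" using assms(3) by simp
  then have "\<forall>C\<in>S2. la2 C = lb2 C" using assms(2) by metis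
  moreover have "\<forall>C\<in>S. la C = lb C" using assms(1) False by metis
  ultimately show ?thesis using delta_labels_cong[of S la lb S2 la2 lb2] assms(7) by blast
next
  case True
  then have M2: "M2 \<in> S2" using assms(3) by simp
  from assms(7) obtain Zi Zj Zk where w: "S = {Zi}" "S2 = {Zj,Zk}" "Zj \<noteq> Zk"
    "(la Zi = xminus \<and> la2 Zj = xminus \<and> la2 Zk = xminus) \<or> (la Zi = xplus \<and> {la2 Zj, la2 Zk} = {xplus, xminus})"
    by (rule delta_labelsE)
  have Zi: "Zi = M0" using True w(1) by simp
  have lbi: "lb Zi \<noteq> la Zi" using assms(4) Zi by simp
  have "(Zj = M2 \<and> lb2 Zk = la2 Zk \<and> lb2 Zj \<noteq> la2 Zj \<and> la Zi = la2 Zj) \<or>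
        (Zk = M2 \<and> lb2 Zj = la2 Zj \<and> lb2 Zk \<noteq> la2 Zk \<and> la Zi = la2 Zk)"
    using assms(2,5,6) w(2,3) M2 Zi by auto
  then have "(lb Zi = xminus \<and> lb2 Zj = xminus \<and> lb2 Zk = xminus) \<or>
      (lb Zi = xplus \<and> {lb2 Zj, lb2 Zk} = {xplus, xminus})"
    using w(4) lbi
    by (cases "la Zi"; cases "lb Zi"; cases "la2 Zj"; cases "la2 Zk"; cases "lb2 Zj"; cases "lb2 Zk")
       (simp_all add: lab_pair_iff)
  then show ?thesis unfolding delta_labels_def using w(1-3) by blast
qed

lemma m_labels_flipI:
  assumes "\<forall>C\<in>S. C \<noteq> M0 \<longrightarrow> la C = lb C" "\<forall>C\<in>S2. C \<noteq> M2 \<longrightarrow> la2 C = lb2 C"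
    "M0 \<in> S \<longleftrightarrow> M2 \<in> S2" "la M0 \<noteq> lb M0" "la2 M2 \<noteq> lb2 M2" "la M0 = la2 M2"
    "m_labels S S2 la la2"
  shows "m_labels S S2 lb lb2"
proof (cases "M0 \<in> S")
  case False
  then have "M2 \<notin> S2" using assms(3) by simp
  then have "\<forall>C\<in>S2. la2 C = lb2 C" using assms(2) by metis
  moreover have "\<forall>C\<in>S. la C = lb C" using assms(1) False by metis
  ultimately show ?thesis using m_labels_cong[of S la lb S2 la2 lb2] assms(7) by blast
next
  case True
  then have M2: "M2 \<in> S2" using assms(3) by simp
  from assms(7) obtain Zi Zj Zk where w: "S = {Zi,Zj}" "S2 = {Zk}" "Zi \<noteq> Zj"
    "(la Zi = xplus \<and> la Zj = xplus \<and> la2 Zk = xplus) \<or> ({la Zi, la Zj} = {xplus, xminus} \<and> la2 Zk = xminus)"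
    by (rule m_labelsE)
  have Zk: "Zk = M2" using M2 w(2) by simp
  have lbk: "lb2 Zk \<noteq> la2 Zk" using assms(5) Zk by simp
  have "(Zi = M0 \<and> lb Zj = la Zj \<and> lb Zi \<noteq> la Zi \<and> la Zi = la2 Zk) \<or>
        (Zj = M0 \<and> lb Zi = la Zi \<and> lb Zj \<noteq> la Zj \<and> la Zj = la2 Zk)"
  proof (cases "Zi = M0")
    case True
    then show ?thesis using assms(1,4,6) w(1,3) Zk by simp
  next
    case False
    then have "Zj = M0" using \<open>M0 \<in> S\<close> w(1) by blast
    then show ?thesis using assms(1,4,6) w(1,3) Zk False by simp
  qed
  then have "(lb Zi = xplus \<and> lb Zj = xplus \<and> lb2 Zk = xplus) \<or>
      ({lb Zi, lb Zj} = {xplus, xminus} \<and> lb2 Zk = xminus)"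
    using w(4) lbk
    by (cases "la Zi"; cases "lb Zi"; cases "la Zj"; cases "lb Zj"; cases "la2 Zk"; cases "lb2 Zk")
       (simp_all add: lab_pair_iff)
  then show ?thesis unfolding m_labels_def using w(1-3) by blast
qed

lemma delta_labels_flip:
  assumes "\<forall>C\<in>S. C \<noteq> M0 \<longrightarrow> la C = lb C" "\<forall>C\<in>S2. C \<noteq> M2 \<longrightarrow> la2 C = lb2 C"
    "M0 \<in> S \<longleftrightarrow> M2 \<in> S2" "la M0 \<noteq> lb M0" "la2 M2 \<noteq> lb2 M2" "la M0 = la2 M2"
  shows "delta_labels S S2 la la2 = delta_labels S S2 lb lb2"
proof
  assume "delta_labels S S2 la la2"
  then show "delta_labels S S2 lb lb2" by (rule delta_labels_flipI[OF assms])
next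
  have a1: "\<forall>C\<in>S. C \<noteq> M0 \<longrightarrow> lb C = la C" using assms(1) by simp
  have a2: "\<forall>C\<in>S2. C \<noteq> M2 \<longrightarrow> lb2 C = la2 C" using assms(2) by simp
  have a4: "lb M0 \<noteq> la M0" using assms(4) by simp
  have a5: "lb2 M2 \<noteq> la2 M2" using assms(5) by simp
  have a6: "lb M0 = lb2 M2" using assms(4,5,6) by (cases "la M0"; cases "lb M0"; cases "lb2 M2") auto
  assume "delta_labels S S2 lb lb2"
  then show "delta_labels S S2 la la2" by (rule delta_labels_flipI[OF a1 a2 assms(3) a4 a5 a6])
qed

lemma m_labels_flip:
  assumes "\<forall>C\<in>S. C \<noteq> M0 \<longrightarrow> la C = lb C" "\<forall>C\<in>S2. C \<noteq> M2 \<longrightarrow> la2 C = lb2 C"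
    "M0 \<in> S \<longleftrightarrow> M2 \<in> S2" "la M0 \<noteq> lb M0" "la2 M2 \<noteq> lb2 M2" "la M0 = la2 M2"
  shows "m_labels S S2 la la2 = m_labels S S2 lb lb2"
proof
  assume "m_labels S S2 la la2"
  then show "m_labels S S2 lb lb2" by (rule m_labels_flipI[OF assms])
next
  have a1: "\<forall>C\<in>S. C \<noteq> M0 \<longrightarrow> lb C = la C" using assms(1) by simp
  have a2: "\<forall>C\<in>S2. C \<noteq> M2 \<longrightarrow> lb2 C = la2 C" using assms(2) by simp
  have a4: "lb M0 \<noteq> la M0" using assms(4) by simp
  have a5: "lb2 M2 \<noteq> la2 M2" using assms(5) by simp
  have a6: "lb M0 = lb2 M2" using assms(4,5,6) by (cases "la M0"; cases "lb M0"; cases "lb2 M2") auto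
  assume "m_labels S S2 lb lb2"
  then show "m_labels S S2 la la2" by (rule m_labels_flipI[OF a1 a2 assms(3) a4 a5 a6])
qed

lemma m_labels_pair:
  assumes "a \<noteq> b"
  shows "m_labels {a,b} {d} l l2 \<longleftrightarrow>
    (l a = xplus \<and> l b = xplus \<and> l2 d = xplus) \<or> ({l a, l b} = {xplus, xminus} \<and> l2 d = xminus)"
proof
  assume "m_labels {a,b} {d} l l2"
  then obtain Zi Zj Zk where w: "{a,b} = {Zi,Zj}" "{d} = {Zk}"
    "(l Zi = xplus \<and> l Zj = xplus \<and> l2 Zk = xplus) \<or> ({l Zi, l Zj} = {xplus, xminus} \<and> l2 Zk = xminus)"
    by (rule m_labelsE)
  have "(Zi = a \<and> Zj = b) \<or> (Zi = b \<and> Zj = a)" using w(1) assms by (metis doubleton_eq_iff)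
  then show "(l a = xplus \<and> l b = xplus \<and> l2 d = xplus) \<or> ({l a, l b} = {xplus, xminus} \<and> l2 d = xminus)"
    using w(2,3) by (auto simp: insert_commute)
next
  assume "(l a = xplus \<and> l b = xplus \<and> l2 d = xplus) \<or> ({l a, l b} = {xplus, xminus} \<and> l2 d = xminus)"
  then show "m_labels {a,b} {d} l l2" unfolding m_labels_def using assms by blast
qed

section \<open>Moves of the partial order\<close>

lemma step_Pair_iff:
  "step D (B,l) (B2,l2) \<longleftrightarrow> B \<subseteq> arcs D \<and> l \<in> extensional (circles D B) \<and> l2 \<in> extensional (circles D B2) \<and>
     (\<exists>A \<in> arcs D - B. B2 = insert A B \<and>
        (\<forall>C\<in>circles D B. \<not> meets C A \<longrightarrow> C \<in> circles D B2 \<and> l2 C = l C) \<and>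
        (delta_rel D B l B2 l2 A \<or> m_rel D B l B2 l2 A))"
  unfolding step_def by simp

lemma step_insert_iff:
  assumes "B \<subseteq> arcs D" "A \<in> arcs D" "A \<notin> B"
  shows "step D (B,l) (insert A B, l2) \<longleftrightarrow>
    l \<in> extensional (circles D B) \<and> l2 \<in> extensional (circles D (insert A B)) \<and>
    (\<forall>C\<in>circles D B. \<not> meets C A \<longrightarrow> l2 C = l C) \<and>
    (delta_rel D B l (insert A B) l2 A \<or> m_rel D B l (insert A B) l2 A)"
    (is "_ \<longleftrightarrow> ?rhs")
proof
  assume "step D (B,l) (insert A B, l2)"
  then obtain A' where A': "A' \<in> arcs D - B" "insert A B = insert A' B"
    "\<forall>C\<in>circles D B. \<not> meets C A' \<longrightarrow> C \<in> circles D (insert A B) \<and> l2 C = l C"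
    "delta_rel D B l (insert A B) l2 A' \<or> m_rel D B l (insert A B) l2 A'"
    and ext: "l \<in> extensional (circles D B)" "l2 \<in> extensional (circles D (insert A B))"
    unfolding step_Pair_iff by blast
  have "A' = A" using A'(1,2) assms(3) by blast
  then show ?rhs using A' ext by blast
next
  assume rhs: ?rhs
  then have "\<forall>C\<in>circles D B. \<not> meets C A \<longrightarrow> C \<in> circles D (insert A B) \<and> l2 C = l C"
    using circles_insert_iff_not_meets by blast
  then show "step D (B,l) (insert A B, l2)" unfolding step_Pair_iff using rhs assms by blast
qed

lemma step_keeps_xminus:
  assumes "step D (B,l) (B2,l2)" "n \<in> pts D \<times> UNIV"
    and "l (component_of (sedges D B) n) = xminus"
  shows "l2 (component_of (sedges D B2) n) = xminus"
proof -
  from assms(1) obtain A where A: "B2 = insert A B"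
    "\<forall>C\<in>circles D B. \<not> meets C A \<longrightarrow> C \<in> circles D B2 \<and> l2 C = l C"
    "delta_rel D B l B2 l2 A \<or> m_rel D B l B2 l2 A"
    unfolding step_Pair_iff by blast
  define C where "C = component_of (sedges D B) n"
  define C2 where "C2 = component_of (sedges D B2) n"
  have C: "C \<in> circles D B" "n \<in> C" and C2: "C2 \<in> circles D B2" "n \<in> C2"
    unfolding C_def C2_def using assms(2) by (auto intro: component_in_circles)
  show ?thesis
  proof (cases "meets C A")
    case False
    then have "C \<in> circles D B2" "l2 C = l C" using A(2) C by auto
    then have "C = C2" using C(2) circle_eq_component[of C D B2 n] unfolding C2_def by simp
    then show ?thesis using \<open>l2 C = l C\<close> assms(3) unfolding C_def C2_def by simp
  next
    case True
    have "meets C2 A"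
    proof (rule ccontr)
      assume "\<not> meets C2 A"
      then have "C2 \<in> circles D B" using C2(1) A(1) circles_insert_iff_not_meets by blast
      then have "C2 = C" using C2(2) circle_eq_component[of C2 D B n] unfolding C_def by simp
      then show False using True \<open>\<not> meets C2 A\<close> by simp
    qed
    then have S: "C \<in> {C\<in>circles D B. meets C A}" "C2 \<in> {C\<in>circles D B2. meets C A}"
      using C C2 True by simp_all
    have "l C = xminus" using assms(3) unfolding C_def .
    from A(3) show ?thesis
    proof
      assume "delta_rel D B l B2 l2 A"
      then have "delta_labels {C\<in>circles D B. meets C A} {C\<in>circles D B2. meets C A} l l2"
        by (simp add: delta_rel_iff)
      from delta_labels_xminus[OF this S(1) \<open>l C = xminus\<close> S(2)] show ?thesis unfolding C2_def .
    next
      assume "m_rel D B l B2 l2 A"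
      then have "m_labels {C\<in>circles D B. meets C A} {C\<in>circles D B2. meets C A} l l2"
        by (simp add: m_rel_iff)
      from m_labels_xminus[OF this S(1) \<open>l C = xminus\<close> S(2)] show ?thesis unfolding C2_def .
    qed
  qed
qed

lemma step_wf_labelled:
  "step D e1 e2 \<Longrightarrow> fst e2 \<subseteq> arcs D \<and> snd e2 \<in> extensional (circles D (fst e2))"
  by (cases e1; cases e2) (auto simp: step_Pair_iff)

lemma leq_wf_labelled:
  assumes "leq D e1 e2" "fst e1 \<subseteq> arcs D \<and> snd e1 \<in> extensional (circles D (fst e1))"
  shows "fst e2 \<subseteq> arcs D \<and> snd e2 \<in> extensional (circles D (fst e2))"
  using assms unfolding leq_def by (induction rule: rtranclp_induct) (auto dest: step_wf_labelled)

lemma leq_keeps_xminus: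
  assumes "leq D e1 e2" "n \<in> pts D \<times> UNIV"
    and "snd e1 (component_of (sedges D (fst e1)) n) = xminus"
  shows "snd e2 (component_of (sedges D (fst e2)) n) = xminus"
  using assms unfolding leq_def
proof (induction rule: rtranclp_induct)
  case (step e e')
  then show ?case using step_keeps_xminus[of D "fst e" "snd e" "fst e'" "snd e'" n] by simp
qed

lemma Ppos_step_closed:
  "a \<in> Ppos D x y \<Longrightarrow> e2 \<in> Ppos D x y \<Longrightarrow> leq D a e1 \<Longrightarrow> step D e1 e2 \<Longrightarrow> e1 \<in> Ppos D x y"
  unfolding Ppos_def leq_def by (auto intro: rtranclp_trans converse_rtranclp_into_rtranclp)

section \<open>Deleting a leaf together with its arc\<close>

locale leaf_deletion =
  fixes D :: "'p rconf" and x y :: "'p node set \<Rightarrow> lab"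
    and Z1 Z1s Z2s :: "'p node set" and A1 :: "'p set" and p q :: 'p
  assumes decorated_D: "decorated D x y"
    and leaf_Z1: "leaf D Z1"
    and A1_arc: "A1 \<in> arcs D" and A1_eq: "A1 = {p, q}" and p_on_Z1: "on_circle p Z1"
    and Z1s_circle: "Z1s \<in> circles D (arcs D)" and Z1s_dual: "dual_arc_circle A1 Z1s"
    and Z2s_circle: "Z2s \<in> circles D (arcs D - {A1})" and Z2s_ne_Z1: "Z2s \<noteq> Z1"
    and Z2s_meets_A1: "\<exists>r\<in>A1. on_circle r Z2s"
begin

definition "D' = delete_circ_arc D Z1 A1"
definition "A' = arcs D - {A1}"
definition "Z1_pts = {r. on_circle r Z1}"

text \<open>Surgery along \<open>A1\<close> merges this circle with \<open>Z1\<close>; \<open>qcirc A'\<close> is the circle \<open>Z\<^sub>2\<^sup>*\<close> of the statement.\<close>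

definition "qcirc B = component_of (sedges D' B) (q,True)"

lemma wf_D: "wf_conf D"
  using decorated_D unfolding decorated_def by blast

lemma finite_pts: "finite (pts D)" and nxt_bij: "bij_betw (nxt D) (pts D) (pts D)"
  and card_arc: "A \<in> arcs D \<Longrightarrow> card A = 2" and arc_subset_pts: "A \<in> arcs D \<Longrightarrow> A \<subseteq> pts D"
  and arcs_disjoint: "A \<in> arcs D \<Longrightarrow> A'' \<in> arcs D \<Longrightarrow> A \<noteq> A'' \<Longrightarrow> A \<inter> A'' = {}"
  using wf_D unfolding wf_conf_def by blast+

lemma nxt_in_pts: "r \<in> pts D \<Longrightarrow> nxt D r \<in> pts D"
  using nxt_bij unfolding bij_betw_def by blast

lemma finite_arcs: "finite (arcs D)"
  by (rule finite_subset[of _ "Pow (pts D)"]) (use arc_subset_pts finite_pts in auto)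

lemma D'_simps [simp]:
  "pts D' = {r\<in>pts D. r \<notin> Z1_pts}" "nxt D' = nxt D" "lft D' = lft D" "arcs D' = A'"
  unfolding D'_def delete_circ_arc_def Z1_pts_def A'_def by auto

lemma A'_iff: "A \<in> A' \<longleftrightarrow> A \<in> arcs D \<and> A \<noteq> A1"
  unfolding A'_def by simp

lemma arcs_eq: "arcs D = insert A1 A'"
  unfolding A'_def using A1_arc by blast

lemma p_ne_q: "p \<noteq> q"
  using card_arc[OF A1_arc] A1_eq by (cases "p = q") auto

lemma p_pts: "p \<in> pts D" and q_pts: "q \<in> pts D"
  using arc_subset_pts[OF A1_arc] A1_eq by auto

lemma p_in_Z1_pts: "p \<in> Z1_pts"
  using p_on_Z1 unfolding Z1_pts_def by simp

lemma Z1_circle: "Z1 \<in> circles D {}"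
  using leaf_Z1 unfolding leaf_def by blast

lemma Z1_subset_nodes: "Z1 \<subseteq> pts D \<times> UNIV"
  by (rule circles_subset_nodes[OF wf_D _ Z1_circle]) simp

lemma Z1_iff: "(r,b) \<in> Z1 \<longleftrightarrow> r \<in> Z1_pts"
proof -
  have "((r,False),(r,True)) \<in> sedges D {}" if "(r,b') \<in> Z1" for b'
    using that Z1_subset_nodes sedges_local_edge[of r D "{}"] by blast
  then have "(r,False) \<in> Z1 \<longleftrightarrow> (r,True) \<in> Z1"
    using component_of_edge_iff circle_eq_component[OF Z1_circle] by metis
  then show ?thesis unfolding Z1_pts_def on_circle_def by (cases b) auto
qed

lemma nxt_in_Z1_pts_iff: "r \<in> pts D \<Longrightarrow> nxt D r \<in> Z1_pts \<longleftrightarrow> r \<in> Z1_pts"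
proof -
  assume "r \<in> pts D"
  then have "((r,True),(nxt D r,False)) \<in> sedges D {}" by (rule sedges_circle_edge)
  then have "(r,True) \<in> Z1 \<longleftrightarrow> (nxt D r,False) \<in> Z1"
    using component_of_edge_iff circle_eq_component[OF Z1_circle] by metis
  then show ?thesis using Z1_iff by blast
qed

lemma nodes_D_eq: "pts D \<times> (UNIV::bool set) = Z1 \<union> pts D' \<times> UNIV"
proof (intro equalityI subsetI)
  fix n assume "n \<in> pts D \<times> (UNIV::bool set)"
  then obtain r b where "n = (r,b)" "r \<in> pts D" by blast
  then show "n \<in> Z1 \<union> pts D' \<times> UNIV" using Z1_iff[of r b] by simp
next
  fix n assume "n \<in> Z1 \<union> pts D' \<times> (UNIV::bool set)"
  then show "n \<in> pts D \<times> UNIV" using Z1_subset_nodes by auto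
qed

lemma Z1_pts_subset: "Z1_pts \<subseteq> pts D"
  using Z1_subset_nodes Z1_iff by blast

lemma leaf_no_arc_inside: "{A\<in>arcs D. \<forall>r\<in>A. on_circle r Z1} = {}"
  and leaf_arc_meeting_once: "{A\<in>arcs D. card {r\<in>A. on_circle r Z1} = 1} = {A1}"
proof -
  let ?X1 = "{A\<in>arcs D. card {r\<in>A. on_circle r Z1} = 1}" and ?X2 = "{A\<in>arcs D. \<forall>r\<in>A. on_circle r Z1}"
  have "card ?X1 + 2 * card ?X2 = 1"
    using leaf_Z1 unfolding leaf_def deg_def by simp
  then have c1: "card ?X1 = 1" and "card ?X2 = 0" by presburger+
  moreover have "finite ?X2" using finite_arcs by simp
  ultimately show X2: "?X2 = {}" by simp
  then have "A1 \<notin> ?X2" by simp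
  then have "\<not> on_circle q Z1" using A1_arc by (simp add: A1_eq p_on_Z1)
  then have "{r\<in>A1. on_circle r Z1} = {p}" using A1_eq p_on_Z1 by auto
  then have "A1 \<in> ?X1" using A1_arc by simp
  moreover obtain A where "?X1 = {A}" using c1 by (rule card_1_singletonE)
  ultimately show "?X1 = {A1}" by (metis singletonD)
qed

lemma q_notin_Z1_pts: "q \<notin> Z1_pts"
proof -
  have "A1 \<notin> {A\<in>arcs D. \<forall>r\<in>A. on_circle r Z1}" by (simp only: leaf_no_arc_inside) simp
  then show ?thesis using A1_arc by (simp add: A1_eq p_on_Z1 Z1_pts_def)
qed

lemma other_arc_disjoint_Z1_pts:
  assumes "A \<in> arcs D" "A \<noteq> A1"
  shows "A \<inter> Z1_pts = {}"
proof (rule ccontr)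
  assume "A \<inter> Z1_pts \<noteq> {}"
  then obtain r where r: "r \<in> A" "on_circle r Z1" unfolding Z1_pts_def by blast
  obtain s where s: "A = {r,s}" "r \<noteq> s"
    using card_arc[OF assms(1)] r(1) by (metis card_2_iff doubleton_eq_iff insertE singletonD)
  show False
  proof (cases "on_circle s Z1")
    case True
    then have "A \<in> {A\<in>arcs D. \<forall>r\<in>A. on_circle r Z1}" using assms(1) s r by auto
    then show False by (simp only: leaf_no_arc_inside) simp
  next
    case False
    then have "{r'\<in>A. on_circle r' Z1} = {r}" using s r by auto
    then have "A \<in> {A\<in>arcs D. card {r\<in>A. on_circle r Z1} = 1}" using assms(1) by simp
    then show False using assms(2) by (simp only: leaf_arc_meeting_once) simp
  qed
qed

lemma arcs'_notin_Z1_pts: "B \<subseteq> A' \<Longrightarrow> r \<in> \<Union>B \<Longrightarrow> r \<notin> Z1_pts"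
  using other_arc_disjoint_Z1_pts unfolding A'_def by blast

lemma arcs'_notin_A1: "B \<subseteq> A' \<Longrightarrow> r \<in> \<Union>B \<Longrightarrow> r \<notin> A1"
  using arcs_disjoint A1_arc unfolding A'_def by blast

lemma wf_D': "wf_conf D'"
proof -
  have "nxt D ` Z1_pts = Z1_pts"
  proof
    show "nxt D ` Z1_pts \<subseteq> Z1_pts" using nxt_in_Z1_pts_iff Z1_pts_subset by blast
    show "Z1_pts \<subseteq> nxt D ` Z1_pts"
    proof
      fix r assume r: "r \<in> Z1_pts"
      then obtain s where "s \<in> pts D" "r = nxt D s"
        using nxt_bij Z1_pts_subset unfolding bij_betw_def by blast
      with r nxt_in_Z1_pts_iff show "r \<in> nxt D ` Z1_pts" by blast
    qed
  qed
  then have "bij_betw (nxt D) Z1_pts Z1_pts"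
    using bij_betw_subset[OF nxt_bij Z1_pts_subset] by blast
  then have "bij_betw (nxt D) (pts D - Z1_pts) (pts D - Z1_pts)"
    using bij_betw_DiffI[OF nxt_bij] Z1_pts_subset by blast
  then have "bij_betw (nxt D') (pts D') (pts D')"
    by (simp add: set_diff_eq)
  moreover have "card A = 2 \<and> A \<subseteq> pts D'" if "A \<in> arcs D'" for A
  proof -
    from that have A: "A \<in> arcs D" "A \<noteq> A1" by (simp_all add: A'_iff)
    show ?thesis
      using card_arc[OF A(1)] arc_subset_pts[OF A(1)] other_arc_disjoint_Z1_pts[OF A] by auto
  qed
  moreover have "\<forall>A\<in>arcs D'. \<forall>A''\<in>arcs D'. A \<noteq> A'' \<longrightarrow> A \<inter> A'' = {}"
    using arcs_disjoint by (simp add: A'_iff)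
  ultimately show ?thesis
    using finite_pts unfolding wf_conf_def by simp
qed

lemma pT_in_Z1: "(p,True) \<in> Z1"
  using p_in_Z1_pts Z1_iff by simp

lemma Z1_eq_component: "Z1 = component_of (sedges D {}) (p,True)"
  using circle_eq_component[OF Z1_circle pT_in_Z1] .

lemma component_p_without_A1:
  assumes "B \<subseteq> A'"
  shows "component_of (sedges D B) (p,True) = Z1"
proof -
  have "sym_diff (sedges D {}) (sedges D B) \<subseteq> (\<Union>B \<times> UNIV) \<times> (\<Union>B \<times> UNIV)"
    using sedges_sym_diff[of "{}" B D] by simp
  moreover have "component_of (sedges D {}) (p,True) \<inter> (\<Union>B \<times> UNIV) = {}"
    using Z1_iff arcs'_notin_Z1_pts[OF assms] unfolding Z1_eq_component[symmetric] by blast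
  ultimately have "component_of (sedges D B) (p,True) = component_of (sedges D {}) (p,True)"
    by (rule component_of_cong_outside)
  then show ?thesis by (simp only: Z1_eq_component[symmetric])
qed

lemma component_Z1_without_A1: "B \<subseteq> A' \<Longrightarrow> n \<in> Z1 \<Longrightarrow> component_of (sedges D B) n = Z1"
  using component_p_without_A1 component_of_eq by metis

lemma component_disjoint_Z1:
  assumes "B \<subseteq> A'" "n \<notin> Z1"
  shows "component_of (sedges D B) n \<inter> Z1 = {}"
  using component_of_disjoint[of n "sedges D B" "(p,True)"] component_p_without_A1[OF assms(1)] assms(2)
  by simp

lemma sedges_D'_sym_diff: "sym_diff (sedges D B) (sedges D' B) \<subseteq> Z1 \<times> Z1"
proof
  fix e assume "e \<in> sym_diff (sedges D B) (sedges D' B)"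
  then obtain r where r: "r \<in> pts D" "r \<in> Z1_pts" "e = ((r,True),(nxt D r,False)) \<or> e = ((r,False),(r,True))"
    unfolding sedges_def by auto
  then have "nxt D r \<in> Z1_pts" using nxt_in_Z1_pts_iff by blast
  with r show "e \<in> Z1 \<times> Z1" using Z1_iff by auto
qed

lemma component_D'_eq:
  assumes "B \<subseteq> A'" "n \<notin> Z1"
  shows "component_of (sedges D' B) n = component_of (sedges D B) n"
  using component_of_cong_outside[OF sedges_D'_sym_diff component_disjoint_Z1[OF assms]] .

lemma circles_D'_disjoint_Z1:
  assumes "B \<subseteq> A'" "C \<in> circles D' B"
  shows "C \<inter> Z1 = {}"
proof -
  obtain n where n: "n \<in> pts D' \<times> UNIV" "C = component_of (sedges D' B) n"
    using assms(2) unfolding circles_eq_image by blast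
  then have "n \<notin> Z1" using Z1_iff by auto
  then show ?thesis using component_D'_eq[OF assms(1)] component_disjoint_Z1[OF assms(1)] n(2) by simp
qed

lemma Z1_notin_circles_D': "B \<subseteq> A' \<Longrightarrow> Z1 \<notin> circles D' B"
  using circles_D'_disjoint_Z1 pT_in_Z1 by blast

lemma circles_without_A1:
  assumes "B \<subseteq> A'"
  shows "circles D B = insert Z1 (circles D' B)"
proof -
  have "component_of (sedges D B) ` Z1 = (\<lambda>_. Z1) ` Z1"
    using component_Z1_without_A1[OF assms] by (rule image_cong[OF refl])
  also have "\<dots> = {Z1}" using pT_in_Z1 by auto
  finally have "component_of (sedges D B) ` Z1 = {Z1}" .
  moreover have "component_of (sedges D B) ` (pts D' \<times> UNIV) = component_of (sedges D' B) ` (pts D' \<times> UNIV)"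
  proof (rule image_cong[OF refl])
    fix n assume "n \<in> pts D' \<times> (UNIV::bool set)"
    then have "n \<notin> Z1" using Z1_iff by auto
    then show "component_of (sedges D B) n = component_of (sedges D' B) n"
      using component_D'_eq[OF assms] by simp
  qed
  ultimately show ?thesis unfolding circles_eq_image nodes_D_eq image_Un by simp
qed

lemma q_in_pts_D': "q \<in> pts D'"
  using q_pts q_notin_Z1_pts by simp

lemma qcirc_in_circles: "qcirc B \<in> circles D' B"
  unfolding qcirc_def using q_in_pts_D' by (intro component_in_circles) simp

lemma qcirc_eq_component_D: "B \<subseteq> A' \<Longrightarrow> qcirc B = component_of (sedges D B) (q,True)"
  unfolding qcirc_def using component_D'_eq q_notin_Z1_pts Z1_iff by blast

lemma qT_in_qcirc: "(q,True) \<in> qcirc B"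
  unfolding qcirc_def by simp

lemma qF_in_qcirc:
  assumes "B \<subseteq> A'"
  shows "(q,False) \<in> qcirc B"
proof -
  have "q \<notin> \<Union>B" using arcs'_notin_A1[OF assms] A1_eq by blast
  then have "((q,False),(q,True)) \<in> sedges D' B" using q_in_pts_D' by (intro sedges_local_edge) auto
  then show ?thesis unfolding qcirc_def using component_of_edge_iff component_of_self by metis
qed

lemma qcirc_disjoint_Z1: "B \<subseteq> A' \<Longrightarrow> qcirc B \<inter> Z1 = {}"
  using circles_D'_disjoint_Z1 qcirc_in_circles by blast

lemma A1_nodes_in_merged:
  assumes "B \<subseteq> A'" "r \<in> A1"
  shows "(r,b) \<in> qcirc B \<union> Z1"
proof -
  have "r = p \<or> r = q" using assms(2) A1_eq by blast
  then show ?thesis using p_in_Z1_pts Z1_iff qT_in_qcirc qF_in_qcirc[OF assms(1)] by (cases b) auto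
qed

lemma component_with_A1_outside:
  assumes "B \<subseteq> A'" "n \<notin> qcirc B \<union> Z1"
  shows "component_of (sedges D (insert A1 B)) n = component_of (sedges D' B) n"
proof -
  have "(A1 \<times> UNIV) \<subseteq> qcirc B \<union> Z1" using A1_nodes_in_merged[OF assms(1)] by blast
  then have "sym_diff (sedges D B) (sedges D (insert A1 B)) \<subseteq> (qcirc B \<union> Z1) \<times> (qcirc B \<union> Z1)"
    using sedges_insert_sym_diff[of D B A1] by blast
  moreover have "n \<notin> Z1" "n \<notin> qcirc B" using assms(2) by auto
  then have "component_of (sedges D B) n \<inter> (qcirc B \<union> Z1) = {}"
    using component_disjoint_Z1[OF assms(1) \<open>n \<notin> Z1\<close>] component_of_disjoint[of n "sedges D B" "(q,True)"]
      qcirc_eq_component_D[OF assms(1)] by auto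
  ultimately have "component_of (sedges D (insert A1 B)) n = component_of (sedges D B) n"
    by (rule component_of_cong_outside)
  then show ?thesis using component_D'_eq[OF assms(1) \<open>n \<notin> Z1\<close>] by simp
qed

lemma funpow_nxt_p: "(nxt D ^^ k) p \<in> Z1_pts \<and> (nxt D ^^ k) p \<in> pts D"
  by (induction k) (simp_all add: p_in_Z1_pts p_pts nxt_in_Z1_pts_iff nxt_in_pts)

lemma least_power_nxt_p:
  "0 < least_power (nxt D) p" "(nxt D ^^ least_power (nxt D) p) p = p"
proof -
  have "inj_on (nxt D) (pts D)" "nxt D ` pts D \<subseteq> pts D"
    using nxt_bij unfolding bij_betw_def by auto
  then obtain n where n: "0 < n" "(nxt D ^^ n) p = p"
    by (rule inj_on_funpow_returns[OF finite_pts _ _ p_pts])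
  show "0 < least_power (nxt D) p" "(nxt D ^^ least_power (nxt D) p) p = p"
    using least_powerI[OF n(2,1)] by simp_all
qed

lemma Z1_pts_notin_arcs_with_A1:
  "B \<subseteq> A' \<Longrightarrow> r \<in> Z1_pts \<Longrightarrow> r \<noteq> p \<Longrightarrow> r \<notin> \<Union>(insert A1 B)"
  using arcs'_notin_Z1_pts A1_eq q_notin_Z1_pts by auto

text \<open>After surgery along \<open>A1\<close> the two ends at \<open>p\<close> are still joined, the long way round \<open>Z1\<close>.\<close>

lemma pF_in_component_with_A1:
  assumes "B \<subseteq> A'"
  shows "(p,False) \<in> component_of (sedges D (insert A1 B)) (p,True)"
proof -
  let ?E = "sedges D (insert A1 B)" and ?r = "\<lambda>k. (nxt D ^^ k) p"
  have "(?r k, False) \<in> component_of ?E (p,True)" if "0 < k" "k \<le> least_power (nxt D) p" for k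
    using that
  proof (induction k)
    case 0
    then show ?case by simp
  next
    case (Suc k)
    have r: "?r k \<in> Z1_pts" "?r k \<in> pts D" using funpow_nxt_p by auto
    have "(?r k, True) \<in> component_of ?E (p,True)"
    proof (cases "k = 0")
      case True
      then show ?thesis by simp
    next
      case False
      have "?r k \<noteq> p"
      proof
        assume "?r k = p"
        then have "least_power (nxt D) p \<le> k" using False by (intro least_power_le) simp_all
        then show False using Suc.prems by simp
      qed
      with r have "?r k \<notin> \<Union>(insert A1 B)" using Z1_pts_notin_arcs_with_A1[OF assms] by blast
      then have "((?r k, False),(?r k, True)) \<in> ?E" by (rule sedges_local_edge[OF r(2)])
      moreover have "(?r k, False) \<in> component_of ?E (p,True)" using Suc.IH Suc.prems False by simp
      ultimately show ?thesis by (rule component_of_edge_fw)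
    qed
    moreover have "((?r k, True), (nxt D (?r k), False)) \<in> ?E" by (rule sedges_circle_edge[OF r(2)])
    ultimately have "(nxt D (?r k), False) \<in> component_of ?E (p,True)"
      by (rule component_of_edge_fw[rotated])
    then show ?case by simp
  qed
  from this[of "least_power (nxt D) p"] show ?thesis using least_power_nxt_p by simp
qed

lemma Z1_subset_component_with_A1:
  assumes "B \<subseteq> A'"
  shows "Z1 \<subseteq> component_of (sedges D (insert A1 B)) (p,True)"
proof -
  let ?E = "sedges D (insert A1 B)" and ?F = "sedges D {}"
  have "Restr (?F - {((p,False),(p,True))}) Z1 \<subseteq> ?E"
  proof
    fix e assume e: "e \<in> Restr (?F - {((p,False),(p,True))}) Z1"
    show "e \<in> ?E"
    proof (rule ccontr)
      assume "e \<notin> ?E"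
      then obtain r where r: "r \<in> \<Union>(insert A1 B)" "e = ((r,False),(r,True))"
        using e sedges_lost_edge[of "{}" "insert A1 B" e D] by auto
      then have "r \<in> Z1_pts" "r \<noteq> p" using e Z1_iff by auto
      then show False using r(1) Z1_pts_notin_arcs_with_A1[OF assms] by blast
    qed
  qed
  moreover have "insert (p,True) {(p,False),(p,True)} \<subseteq> component_of ?E (p,True)"
    using pF_in_component_with_A1[OF assms] by simp
  ultimately show ?thesis
    using component_of_subset_after_cut[of "{((p,False),(p,True))}" "{(p,False),(p,True)}" ?F "(p,True)" ?E]
    unfolding Z1_eq_component[symmetric] by blast
qed

lemma q_nodes_in_component_with_A1:
  assumes "B \<subseteq> A'"
  shows "(q,b) \<in> component_of (sedges D (insert A1 B)) (p,True)"
proof -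
  let ?E = "sedges D (insert A1 B)"
  have p_nodes: "(p,b') \<in> component_of ?E (p,True)" for b'
    using pF_in_component_with_A1[OF assms] by (cases b') simp_all
  have "{p,q} \<in> insert A1 B" using A1_eq by simp
  from sedges_arc_edges[OF this p_ne_q]
  show ?thesis
  proof
    assume "lft D p = lft D q \<and> ((p,False),(q,False)) \<in> ?E \<and> ((p,True),(q,True)) \<in> ?E"
    then have "((p,b),(q,b)) \<in> ?E" by (cases b) simp_all
    then show ?thesis using p_nodes by (rule component_of_edge_fw)
  next
    assume h: "lft D p \<noteq> lft D q \<and> ((p,False),(q,True)) \<in> ?E \<and> ((q,False),(p,True)) \<in> ?E"
    show ?thesis
    proof (cases b)
      case True
      then show ?thesis using component_of_edge_fw[of "(p,False)" "(q,True)" ?E, OF _ p_nodes] h by simp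
    next
      case False
      then show ?thesis using component_of_edge_bw[of "(q,False)" "(p,True)" ?E, OF _ p_nodes] h by simp
    qed
  qed
qed

lemma qcirc_subset_component_with_A1:
  assumes "B \<subseteq> A'"
  shows "qcirc B \<subseteq> component_of (sedges D (insert A1 B)) (p,True)"
proof -
  let ?E = "sedges D (insert A1 B)" and ?F = "sedges D B"
  have "Restr (?F - {((q,False),(q,True))}) (qcirc B) \<subseteq> ?E"
  proof
    fix e assume e: "e \<in> Restr (?F - {((q,False),(q,True))}) (qcirc B)"
    show "e \<in> ?E"
    proof (rule ccontr)
      assume "e \<notin> ?E"
      then obtain r where r: "r \<in> \<Union>(insert A1 B) - \<Union>B" "e = ((r,False),(r,True))"
        using e sedges_lost_edge[of B "insert A1 B" e D] by blast
      then have "(r,True) \<in> qcirc B" "r \<noteq> q" using e by auto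
      then have "r \<notin> Z1_pts" using qcirc_disjoint_Z1[OF assms] Z1_iff by blast
      then show False using r(1) \<open>r \<noteq> q\<close> A1_eq p_in_Z1_pts by auto
    qed
  qed
  moreover have "insert (q,True) {(q,False),(q,True)} \<subseteq> component_of ?E (p,True)"
    using q_nodes_in_component_with_A1[OF assms] by blast
  ultimately show ?thesis
    using component_of_subset_after_cut[of "{((q,False),(q,True))}" "{(q,False),(q,True)}" ?F "(q,True)" ?E]
    unfolding qcirc_eq_component_D[OF assms, symmetric] by blast
qed

lemma component_p_with_A1:
  assumes "B \<subseteq> A'"
  shows "component_of (sedges D (insert A1 B)) (p,True) = qcirc B \<union> Z1"
proof
  let ?E = "sedges D (insert A1 B)" and ?M = "qcirc B \<union> Z1"
  have "a \<in> ?M \<longleftrightarrow> b \<in> ?M" if "(a,b) \<in> ?E" for a b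
  proof (cases "(a,b) \<in> sedges D B")
    case True
    have "a \<in> Z1 \<longleftrightarrow> b \<in> Z1"
      using component_of_edge_iff[OF True, of "(p,True)"] component_p_without_A1[OF assms] by simp
    moreover have "a \<in> qcirc B \<longleftrightarrow> b \<in> qcirc B"
      using component_of_edge_iff[OF True, of "(q,True)"] qcirc_eq_component_D[OF assms] by simp
    ultimately show ?thesis by blast
  next
    case False
    then have "(a,b) \<in> (A1 \<times> UNIV) \<times> (A1 \<times> UNIV)" using that sedges_insert_sym_diff by blast
    then show ?thesis using A1_nodes_in_merged[OF assms] by auto
  qed
  then show "component_of ?E (p,True) \<subseteq> ?M"
    using component_of_subset_closed[of ?E ?M "(p,True)"] pT_in_Z1 by blast
  show "?M \<subseteq> component_of ?E (p,True)"
    using Z1_subset_component_with_A1[OF assms] qcirc_subset_component_with_A1[OF assms] by blast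
qed

lemma component_merged_with_A1:
  "B \<subseteq> A' \<Longrightarrow> n \<in> qcirc B \<union> Z1 \<Longrightarrow> component_of (sedges D (insert A1 B)) n = qcirc B \<union> Z1"
  using component_p_with_A1 component_of_eq by metis

lemma merged_notin_circles_D': "B \<subseteq> A' \<Longrightarrow> qcirc B \<union> Z1 \<notin> circles D' B"
  using circles_D'_disjoint_Z1 pT_in_Z1 by blast

lemma merged_ne_qcirc: "B \<subseteq> A' \<Longrightarrow> qcirc B \<union> Z1 \<noteq> qcirc B"
  using merged_notin_circles_D' qcirc_in_circles by metis

lemma circles_with_A1:
  assumes "B \<subseteq> A'"
  shows "circles D (insert A1 B) = insert (qcirc B \<union> Z1) (circles D' B - {qcirc B})"
proof -
  let ?E = "sedges D (insert A1 B)" and ?M = "qcirc B \<union> Z1"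
  have "qcirc B \<subseteq> pts D' \<times> UNIV"
    using circles_subset_nodes[OF wf_D' _ qcirc_in_circles] assms by simp
  then have nodes: "pts D \<times> (UNIV::bool set) = ?M \<union> (pts D' \<times> UNIV - qcirc B)"
    using nodes_D_eq by blast
  have "component_of ?E ` ?M = (\<lambda>_. ?M) ` ?M"
    using component_merged_with_A1[OF assms] by (rule image_cong[OF refl])
  also have "\<dots> = {?M}" using pT_in_Z1 by auto
  finally have "component_of ?E ` ?M = {?M}" .
  moreover have "component_of ?E ` (pts D' \<times> UNIV - qcirc B) =
      component_of (sedges D' B) ` (pts D' \<times> UNIV - qcirc B)"
  proof (rule image_cong[OF refl])
    fix n assume "n \<in> pts D' \<times> (UNIV::bool set) - qcirc B"
    then have "n \<notin> ?M" using Z1_iff by auto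
    then show "component_of ?E n = component_of (sedges D' B) n"
      using component_with_A1_outside[OF assms] by simp
  qed
  moreover have "component_of (sedges D' B) ` (pts D' \<times> UNIV - qcirc B) = circles D' B - {qcirc B}"
    unfolding qcirc_def circles_eq_image using q_in_pts_D' by (intro component_of_image_diff) simp
  ultimately show ?thesis unfolding circles_eq_image[of D "insert A1 B"] nodes image_Un by simp
qed

lemma finite_circles_D': "finite (circles D' B)"
  using finite_circles wf_D' unfolding wf_conf_def by blast

lemma card_circles_without_A1: "B \<subseteq> A' \<Longrightarrow> card (circles D B) = card (circles D' B) + 1"
  using circles_without_A1 Z1_notin_circles_D' finite_circles_D' by simp

lemma card_circles_with_A1:
  assumes "B \<subseteq> A'"
  shows "card (circles D (insert A1 B)) = card (circles D' B)"
proof -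
  have "card (circles D (insert A1 B)) = card (circles D' B - {qcirc B}) + 1"
    using circles_with_A1[OF assms] merged_notin_circles_D'[OF assms] finite_circles_D' by simp
  also have "\<dots> = card (circles D' B)"
    using qcirc_in_circles finite_circles_D' by (metis card_Suc_Diff1 Suc_eq_plus1)
  finally show ?thesis .
qed

lemma not_meets_Z1:
  assumes "A \<in> A'"
  shows "\<not> meets Z1 A"
proof
  assume "meets Z1 A"
  then obtain r s where "r \<in> A" "(r,s) \<in> Z1" unfolding meets_def by blast
  then have "r \<in> A \<inter> Z1_pts" using Z1_iff by blast
  then show False using other_arc_disjoint_Z1_pts assms unfolding A'_iff by blast
qed

lemma meets_merged_iff: "A \<in> A' \<Longrightarrow> meets (C \<union> Z1) A \<longleftrightarrow> meets C A"
  using not_meets_Z1 unfolding meets_iff by blast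

lemma merged_meets_A1: "meets (C \<union> Z1) A1"
  unfolding meets_def using pT_in_Z1 A1_eq by blast

lemma meets_A1_iff_qcirc:
  assumes "B \<subseteq> A'" "C \<in> circles D' B"
  shows "meets C A1 \<longleftrightarrow> C = qcirc B"
proof
  assume "meets C A1"
  then obtain r s where rs: "r \<in> A1" "(r,s) \<in> C" unfolding meets_def by blast
  have "(r,s) \<notin> Z1" using circles_D'_disjoint_Z1[OF assms] rs(2) by blast
  then have "r = q" using rs(1) A1_eq p_in_Z1_pts Z1_iff by auto
  then have "(r,s) \<in> qcirc B" using qT_in_qcirc qF_in_qcirc[OF assms(1)] by (cases s) auto
  then show "C = qcirc B"
    using circle_eq_component[OF assms(2) rs(2)] circle_eq_component[OF qcirc_in_circles] by auto
next
  assume "C = qcirc B"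
  then show "meets C A1" unfolding meets_def using qT_in_qcirc A1_eq by blast
qed

lemma meeting_circles_without_A1:
  "B \<subseteq> A' \<Longrightarrow> A \<in> A' \<Longrightarrow> {C\<in>circles D B. meets C A} = {C\<in>circles D' B. meets C A}"
  using circles_without_A1 not_meets_Z1 by auto

lemma step_without_A1_iff:
  assumes B: "B \<subseteq> A'" and A: "A \<in> A'" "A \<notin> B"
    and ext: "l \<in> extensional (circles D B)" "l2 \<in> extensional (circles D (insert A B))"
      "l' \<in> extensional (circles D' B)" "l2' \<in> extensional (circles D' (insert A B))"
    and agree: "\<forall>C\<in>circles D' B. l C = l' C" "\<forall>C\<in>circles D' (insert A B). l2 C = l2' C" "l Z1 = l2 Z1"
  shows "step D (B,l) (insert A B,l2) \<longleftrightarrow> step D' (B,l') (insert A B,l2')"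
proof -
  have B2: "insert A B \<subseteq> A'" using B A by blast
  have "l2 C = l C \<longleftrightarrow> l2' C = l' C" if "C \<in> circles D' B" "\<not> meets C A" for C
    using that agree(1,2) circles_insert_iff_not_meets[of C A D' B] by simp
  then have unchanged: "(\<forall>C\<in>circles D B. \<not> meets C A \<longrightarrow> l2 C = l C) \<longleftrightarrow>
      (\<forall>C\<in>circles D' B. \<not> meets C A \<longrightarrow> l2' C = l' C)"
    using circles_without_A1[OF B] agree(3) by auto
  have S: "{C\<in>circles D B. meets C A} = {C\<in>circles D' B. meets C A}"
    and S2: "{C\<in>circles D (insert A B). meets C A} = {C\<in>circles D' (insert A B). meets C A}"
    using meeting_circles_without_A1[OF B A(1)] meeting_circles_without_A1[OF B2 A(1)] .
  have a1: "\<forall>C\<in>{C\<in>circles D' B. meets C A}. l C = l' C"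
    and a2: "\<forall>C\<in>{C\<in>circles D' (insert A B). meets C A}. l2 C = l2' C"
    using agree(1,2) by blast+
  have "delta_rel D B l (insert A B) l2 A \<longleftrightarrow> delta_rel D' B l' (insert A B) l2' A"
    unfolding delta_rel_iff S S2 card_circles_without_A1[OF B] card_circles_without_A1[OF B2]
    using delta_labels_cong[OF a1 a2] by simp
  moreover have "m_rel D B l (insert A B) l2 A \<longleftrightarrow> m_rel D' B l' (insert A B) l2' A"
    unfolding m_rel_iff S S2 card_circles_without_A1[OF B] card_circles_without_A1[OF B2]
    using m_labels_cong[OF a1 a2] by simp
  moreover have "A \<in> arcs D" "B \<subseteq> arcs D" using A(1) B A'_iff by blast+
  moreover have "A \<in> arcs D'" "B \<subseteq> arcs D'" using A(1) B by simp_all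
  ultimately show ?thesis
    using unchanged step_insert_iff[of B D A l l2] step_insert_iff[of B D' A l' l2'] A(2) ext by blast
qed

section \<open>Moves with and without the arc \<open>A1\<close>\<close>

text \<open>Labellings of \<open>s\<^bsub>B \<union> {A1}\<^esub>(D)\<close> and of \<open>s\<^sub>B(D')\<close> correspond as in the definition of \<open>x'\<close>:
  if \<open>y Z1 = x\<^sub>-\<close>, the merged circle is always labelled \<open>x\<^sub>-\<close>, and merging \<open>Z1\<close> into \<open>qcirc B\<close> is possible only when \<open>qcirc B\<close> carries \<open>x\<^sub>+\<close>.\<close>

definition labels_corr where
  "labels_corr B l l' \<longleftrightarrow> l \<in> extensional (circles D (insert A1 B)) \<and> l' \<in> extensional (circles D' B)
    \<and> (\<forall>C\<in>circles D' B. C \<noteq> qcirc B \<longrightarrow> l' C = l C)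
    \<and> (if y Z1 = xplus then l' (qcirc B) = l (qcirc B \<union> Z1)
       else l' (qcirc B) = xplus \<and> l (qcirc B \<union> Z1) = xminus)"

definition glue where "glue B C = (if C = qcirc B then qcirc B \<union> Z1 else C)"

lemma circles_with_A1_glue: "B \<subseteq> A' \<Longrightarrow> circles D (insert A1 B) = glue B ` circles D' B"
  unfolding circles_with_A1 glue_def using qcirc_in_circles by auto

lemma inj_on_glue: "B \<subseteq> A' \<Longrightarrow> inj_on (glue B) (circles D' B)"
  unfolding glue_def inj_on_def using merged_notin_circles_D' by auto

lemma meets_glue_iff: "A \<in> A' \<Longrightarrow> meets (glue B C) A \<longleftrightarrow> meets C A"
  unfolding glue_def using meets_merged_iff by simp

lemma meeting_circles_with_A1:
  assumes "B \<subseteq> A'" "A \<in> A'"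
  shows "{C\<in>circles D (insert A1 B). meets C A} = glue B ` {C\<in>circles D' B. meets C A}"
  unfolding circles_with_A1_glue[OF assms(1)] using meets_glue_iff[OF assms(2)] by auto

lemma labels_corr_glue: "labels_corr B l l' \<Longrightarrow> C \<in> circles D' B \<Longrightarrow> y Z1 = xplus \<Longrightarrow> l' C = l (glue B C)"
  unfolding labels_corr_def glue_def by auto

lemma labels_corr_glue_ne: "labels_corr B l l' \<Longrightarrow> C \<in> circles D' B \<Longrightarrow> C \<noteq> qcirc B \<Longrightarrow> l' C = l (glue B C)"
  unfolding labels_corr_def glue_def by auto

lemma labels_corr_minus:
  "labels_corr B l l' \<Longrightarrow> y Z1 \<noteq> xplus \<Longrightarrow> l' (qcirc B) = xplus \<and> l (glue B (qcirc B)) = xminus"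
  unfolding labels_corr_def glue_def by auto

lemma qcirc_insert_eq: "\<not> meets (qcirc B) A \<Longrightarrow> qcirc (insert A B) = qcirc B"
  using circles_insert_iff_not_meets[of "qcirc B" A D' B] qcirc_in_circles
    circle_eq_component[of "qcirc B" D' "insert A B" "(q,True)"] qT_in_qcirc
  unfolding qcirc_def by simp

lemma qcirc_insert_meets_iff: "meets (qcirc (insert A B)) A \<longleftrightarrow> meets (qcirc B) A"
proof
  assume "meets (qcirc (insert A B)) A"
  then show "meets (qcirc B) A" using qcirc_insert_eq by fastforce
next
  assume m: "meets (qcirc B) A"
  show "meets (qcirc (insert A B)) A"
  proof (rule ccontr)
    assume nm: "\<not> meets (qcirc (insert A B)) A"
    then have "qcirc (insert A B) \<in> circles D' B"
      using circles_insert_iff_not_meets qcirc_in_circles by blast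
    then have "qcirc (insert A B) = qcirc B"
      using circle_eq_component[OF _ qT_in_qcirc] unfolding qcirc_def by metis
    then show False using m nm by simp
  qed
qed

lemma step_with_A1_unchanged_iff:
  assumes B: "B \<subseteq> A'" and A: "A \<in> A'"
    and c1: "labels_corr B l l'" and c2: "labels_corr (insert A B) l2 l2'"
  shows "(\<forall>C\<in>circles D (insert A1 B). \<not> meets C A \<longrightarrow> l2 C = l C) \<longleftrightarrow>
    (\<forall>C\<in>circles D' B. \<not> meets C A \<longrightarrow> l2' C = l' C)"
proof -
  have "l2' C = l' C \<longleftrightarrow> l2 (glue B C) = l (glue B C)" if C: "C \<in> circles D' B" "\<not> meets C A" for C
  proof (cases "C = qcirc B")
    case True
    then have eq: "qcirc (insert A B) = qcirc B" using qcirc_insert_eq C(2) by simp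
    show ?thesis
    proof (cases "y Z1 = xplus")
      case True
      then show ?thesis
        using labels_corr_glue[OF c2 _ True] labels_corr_glue[OF c1 _ True] qcirc_in_circles eq \<open>C = qcirc B\<close>
        unfolding glue_def by metis
    next
      case False
      then show ?thesis
        using labels_corr_minus[OF c2 False] labels_corr_minus[OF c1 False] eq \<open>C = qcirc B\<close>
        unfolding glue_def by simp
    qed
  next
    case False
    have C2: "C \<in> circles D' (insert A B)" using C circles_insert_iff_not_meets by blast
    have "C \<noteq> qcirc (insert A B)"
    proof
      assume "C = qcirc (insert A B)"
      then have "(q,True) \<in> C" using qT_in_qcirc by simp
      then show False
        using False circle_eq_component[OF C(1)] circle_eq_component[OF qcirc_in_circles qT_in_qcirc]
        unfolding qcirc_def by metis
    qed
    then show ?thesis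
      using labels_corr_glue_ne[OF c2 C2] labels_corr_glue_ne[OF c1 C(1) False] False
      unfolding glue_def by simp
  qed
  then show ?thesis unfolding circles_with_A1_glue[OF B] using meets_glue_iff[OF A] by auto
qed

lemma step_with_A1_labels_iff:
  assumes B: "B \<subseteq> A'" and A: "A \<in> A'"
    and c1: "labels_corr B l l'" and c2: "labels_corr (insert A B) l2 l2'"
  defines "S \<equiv> {C\<in>circles D' B. meets C A}" and "S2 \<equiv> {C\<in>circles D' (insert A B). meets C A}"
  shows "delta_labels S S2 (l \<circ> glue B) (l2 \<circ> glue (insert A B)) = delta_labels S S2 l' l2' \<and>
    m_labels S S2 (l \<circ> glue B) (l2 \<circ> glue (insert A B)) = m_labels S S2 l' l2'"
proof (cases "y Z1 = xplus")
  case True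
  have "\<forall>C\<in>S. (l \<circ> glue B) C = l' C" "\<forall>C\<in>S2. (l2 \<circ> glue (insert A B)) C = l2' C"
    using labels_corr_glue[OF c1 _ True] labels_corr_glue[OF c2 _ True] unfolding S_def S2_def by simp_all
  from delta_labels_cong[OF this] m_labels_cong[OF this] show ?thesis by (simp add: comp_def)
next
  case False
  txt \<open>The merged circle is \<open>x\<^sub>-\<close> while \<open>qcirc\<close> is \<open>x\<^sub>+\<close>, before and after the move alike.\<close>
  have "\<forall>C\<in>S. C \<noteq> qcirc B \<longrightarrow> (l \<circ> glue B) C = l' C"
    "\<forall>C\<in>S2. C \<noteq> qcirc (insert A B) \<longrightarrow> (l2 \<circ> glue (insert A B)) C = l2' C"
    "qcirc B \<in> S \<longleftrightarrow> qcirc (insert A B) \<in> S2"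
    "(l \<circ> glue B) (qcirc B) \<noteq> l' (qcirc B)"
    "(l2 \<circ> glue (insert A B)) (qcirc (insert A B)) \<noteq> l2' (qcirc (insert A B))"
    "(l \<circ> glue B) (qcirc B) = (l2 \<circ> glue (insert A B)) (qcirc (insert A B))"
    using labels_corr_glue_ne[OF c1] labels_corr_glue_ne[OF c2] qcirc_insert_meets_iff qcirc_in_circles
      labels_corr_minus[OF c1 False] labels_corr_minus[OF c2 False]
    unfolding S_def S2_def by auto
  from delta_labels_flip[OF this] m_labels_flip[OF this] show ?thesis by (simp add: comp_def)
qed

lemma step_with_A1_iff:
  assumes B: "B \<subseteq> A'" and A: "A \<in> A'" "A \<notin> B"
    and c1: "labels_corr B l l'" and c2: "labels_corr (insert A B) l2 l2'"
  shows "step D (insert A1 B,l) (insert A (insert A1 B),l2) \<longleftrightarrow> step D' (B,l') (insert A B,l2')"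
proof -
  have B2: "insert A B \<subseteq> A'" using B A by blast
  have ins: "insert A (insert A1 B) = insert A1 (insert A B)" by blast
  let ?S = "{C\<in>circles D' B. meets C A}" and ?S2 = "{C\<in>circles D' (insert A B). meets C A}"
  have S: "{C\<in>circles D (insert A1 B). meets C A} = glue B ` ?S"
    and S2: "{C\<in>circles D (insert A (insert A1 B)). meets C A} = glue (insert A B) ` ?S2"
    unfolding ins using meeting_circles_with_A1[OF B A(1)] meeting_circles_with_A1[OF B2 A(1)] by simp_all
  have i1: "inj_on (glue B) ?S" and i2: "inj_on (glue (insert A B)) ?S2"
    using inj_on_glue[OF B] inj_on_glue[OF B2] by (blast intro: inj_on_subset)+
  have cards: "card (circles D (insert A1 B)) = card (circles D' B)"
    "card (circles D (insert A (insert A1 B))) = card (circles D' (insert A B))"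
    using card_circles_with_A1[OF B] card_circles_with_A1[OF B2] ins by simp_all
  have "delta_rel D (insert A1 B) l (insert A (insert A1 B)) l2 A \<longleftrightarrow> delta_rel D' B l' (insert A B) l2' A"
    and "m_rel D (insert A1 B) l (insert A (insert A1 B)) l2 A \<longleftrightarrow> m_rel D' B l' (insert A B) l2' A"
    unfolding delta_rel_iff m_rel_iff S S2 cards delta_labels_image[OF i1 i2] m_labels_image[OF i1 i2]
    using step_with_A1_labels_iff[OF B A(1) c1 c2] by simp_all
  moreover have "A \<in> arcs D" "A \<noteq> A1" "insert A1 B \<subseteq> arcs D" using A(1) B A'_iff A1_arc by blast+
  moreover have "A \<in> arcs D'" "B \<subseteq> arcs D'" using A(1) B by simp_all
  moreover have "l \<in> extensional (circles D (insert A1 B))" "l2 \<in> extensional (circles D (insert A (insert A1 B)))"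
    "l' \<in> extensional (circles D' B)" "l2' \<in> extensional (circles D' (insert A B))"
    using c1 c2 unfolding labels_corr_def ins by simp_all
  ultimately show ?thesis
    using step_insert_iff[of "insert A1 B" D A l l2] step_insert_iff[of B D' A l' l2'] A(2)
      step_with_A1_unchanged_iff[OF B A(1) c1 c2] by blast
qed

lemma not_delta_rel_A1: "B \<subseteq> A' \<Longrightarrow> \<not> delta_rel D B l (insert A1 B) l2 A1"
  unfolding delta_rel_iff using card_circles_without_A1 card_circles_with_A1 by simp

lemma m_rel_A1_iff:
  assumes B: "B \<subseteq> A'"
  shows "m_rel D B l (insert A1 B) l2 A1 \<longleftrightarrow>
    (l Z1 = xplus \<and> l (qcirc B) = xplus \<and> l2 (qcirc B \<union> Z1) = xplus) \<or>
    ({l Z1, l (qcirc B)} = {xplus, xminus} \<and> l2 (qcirc B \<union> Z1) = xminus)"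
proof -
  have "Z1 \<noteq> qcirc B" using Z1_notin_circles_D'[OF B] qcirc_in_circles by metis
  moreover have "{C\<in>circles D B. meets C A1} = {Z1, qcirc B}"
    unfolding circles_without_A1[OF B] using merged_meets_A1[of "{}"] meets_A1_iff_qcirc[OF B] qcirc_in_circles
    by auto
  moreover have "{C\<in>circles D (insert A1 B). meets C A1} = {qcirc B \<union> Z1}"
    unfolding circles_with_A1[OF B] using merged_meets_A1 meets_A1_iff_qcirc[OF B] by auto
  ultimately show ?thesis
    unfolding m_rel_iff using m_labels_pair card_circles_without_A1[OF B] card_circles_with_A1[OF B] by simp
qed

text \<open>The move along \<open>A1\<close> merges \<open>Z1\<close>, labelled \<open>y Z1\<close>, into \<open>qcirc B\<close>; the merge rule then pins
  down the label of \<open>qcirc B\<close> to the one prescribed by \<open>labels_corr\<close>.\<close>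

lemma step_A1_iff:
  assumes B: "B \<subseteq> A'" and ext: "l \<in> extensional (circles D B)" and lZ1: "l Z1 = y Z1"
    and c2: "labels_corr B l2 l2'"
  shows "step D (B,l) (insert A1 B, l2) \<longleftrightarrow> (\<forall>C\<in>circles D' B. l C = l2' C)"
proof -
  let ?M = "qcirc B \<union> Z1"
  have "A1 \<notin> B" "B \<subseteq> arcs D" using B A'_iff by blast+
  moreover have "l2 \<in> extensional (circles D (insert A1 B))" using c2 unfolding labels_corr_def by blast
  ultimately have step: "step D (B,l) (insert A1 B,l2) \<longleftrightarrow>
      (\<forall>C\<in>circles D B. \<not> meets C A1 \<longrightarrow> l2 C = l C) \<and>
      (delta_rel D B l (insert A1 B) l2 A1 \<or> m_rel D B l (insert A1 B) l2 A1)"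
    using step_insert_iff[of B D A1 l l2] A1_arc ext by blast
  moreover have "\<not> delta_rel D B l (insert A1 B) l2 A1" by (rule not_delta_rel_A1[OF B])
  moreover have "m_rel D B l (insert A1 B) l2 A1 \<longleftrightarrow>
      (l Z1 = xplus \<and> l (qcirc B) = xplus \<and> l2 ?M = xplus) \<or>
      ({l Z1, l (qcirc B)} = {xplus, xminus} \<and> l2 ?M = xminus)"
    by (rule m_rel_A1_iff[OF B])
  moreover have "\<dots> \<longleftrightarrow> l (qcirc B) = l2' (qcirc B)"
  proof (cases "y Z1 = xplus")
    case True
    then have "l2' (qcirc B) = l2 ?M" using c2 unfolding labels_corr_def by simp
    then show ?thesis using lZ1 True by (cases "l (qcirc B)"; cases "l2 ?M") (auto simp: lab_pair_iff)
  next
    case False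
    then have "l2' (qcirc B) = xplus" "l2 ?M = xminus" "y Z1 = xminus"
      using c2 unfolding labels_corr_def by (auto simp: lab_neq_iff)
    then show ?thesis using lZ1 by (cases "l (qcirc B)") (auto simp: lab_pair_iff)
  qed
  moreover have "(\<forall>C\<in>circles D B. \<not> meets C A1 \<longrightarrow> l2 C = l C) \<longleftrightarrow> (\<forall>C\<in>circles D' B - {qcirc B}. l2 C = l C)"
    unfolding circles_without_A1[OF B] using merged_meets_A1[of "{}"] meets_A1_iff_qcirc[OF B] by auto
  moreover have "(\<forall>C\<in>circles D' B. l C = l2' C) \<longleftrightarrow>
      (\<forall>C\<in>circles D' B - {qcirc B}. l2 C = l C) \<and> l (qcirc B) = l2' (qcirc B)"
    using c2 qcirc_in_circles unfolding labels_corr_def by force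
  ultimately show ?thesis using step by blast
qed

section \<open>The isomorphism\<close>

definition "y' = restrict y (circles D' {})"
definition "x' = restrict (\<lambda>C. if C = Z2s then (if y Z1 = xplus then x Z1s else xplus) else x C)
  (circles D' (arcs D'))"

text \<open>The isomorphism \<open>P(D,x,y) \<cong> P(D',x',y') \<times> {0,1}\<close>: the Boolean records whether \<open>A1\<close> has been
  surgered, and the label of the merged circle is moved to \<open>qcirc\<close> as in \<open>labels_corr\<close>.\<close>

definition proj :: "'p set set \<times> ('p node set \<Rightarrow> lab) \<Rightarrow> ('p set set \<times> ('p node set \<Rightarrow> lab)) \<times> bool" where
  "proj e = (if A1 \<in> fst e then
     ((fst e - {A1}, restrict ((snd e)(qcirc (fst e - {A1}) :=
         (if y Z1 = xplus then snd e (qcirc (fst e - {A1}) \<union> Z1) else xplus))) (circles D' (fst e - {A1}))), True)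
   else ((fst e, restrict (snd e) (circles D' (fst e))), False))"

definition lift :: "('p set set \<times> ('p node set \<Rightarrow> lab)) \<times> bool \<Rightarrow> 'p set set \<times> ('p node set \<Rightarrow> lab)" where
  "lift t = (if snd t then (insert A1 (fst (fst t)),
       ((snd (fst t))(qcirc (fst (fst t)) := undefined))(qcirc (fst (fst t)) \<union> Z1 :=
          (if y Z1 = xplus then snd (fst t) (qcirc (fst (fst t))) else xminus)))
    else (fst (fst t), (snd (fst t))(Z1 := y Z1)))"

definition admissible where
  "admissible e \<longleftrightarrow> fst e \<subseteq> arcs D \<and> snd e \<in> extensional (circles D (fst e))
    \<and> (A1 \<notin> fst e \<longrightarrow> snd e Z1 = y Z1)
    \<and> (y Z1 = xminus \<longrightarrow> snd e (component_of (sedges D (fst e)) (p,True)) = xminus)"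

definition admissible' where
  "admissible' e \<longleftrightarrow> fst e \<subseteq> A' \<and> snd e \<in> extensional (circles D' (fst e))
    \<and> (y Z1 = xminus \<longrightarrow> snd e (qcirc (fst e)) = xplus)"

lemma step_admissible:
  assumes "admissible e1" "step D e1 e2"
  shows "admissible e2"
proof -
  obtain B l B2 l2 where e: "e1 = (B,l)" "e2 = (B2,l2)" by (cases e1; cases e2)
  from assms(2) obtain A where A: "A \<in> arcs D - B" "B2 = insert A B"
    "\<forall>C\<in>circles D B. \<not> meets C A \<longrightarrow> C \<in> circles D B2 \<and> l2 C = l C"
    and ext: "l2 \<in> extensional (circles D B2)" "B \<subseteq> arcs D"
    unfolding e step_Pair_iff by blast
  have "l2 Z1 = y Z1" if "A1 \<notin> B2"
  proof -
    from that have "A \<in> A'" "B \<subseteq> A'" "A1 \<notin> B" using A(1,2) ext(2) unfolding A'_def by auto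
    then have "Z1 \<in> circles D B" "\<not> meets Z1 A" using circles_without_A1 not_meets_Z1 by auto
    then have "l2 Z1 = l Z1" using A(3) by blast
    then show ?thesis using assms(1) \<open>A1 \<notin> B\<close> unfolding admissible_def e by simp
  qed
  moreover have "y Z1 = xminus \<longrightarrow> l2 (component_of (sedges D B2) (p,True)) = xminus"
    using step_keeps_xminus[of D B l B2 l2 "(p,True)"] assms p_pts unfolding admissible_def e by auto
  ultimately show ?thesis unfolding admissible_def e using ext A(1,2) by auto
qed

lemma admissible_bot: "admissible ({},y)"
  using decorated_D Z1_eq_component unfolding decorated_def admissible_def by simp

lemma Ppos_admissible: "e \<in> Ppos D x y \<Longrightarrow> admissible e"
proof -
  have "leq D a e \<Longrightarrow> admissible a \<Longrightarrow> admissible e" for a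
    unfolding leq_def by (induction rule: rtranclp_induct) (auto intro: step_admissible)
  then show "e \<in> Ppos D x y \<Longrightarrow> admissible e" unfolding Ppos_def using admissible_bot by blast
qed

lemma top_Ppos: "(arcs D, x) \<in> Ppos D x y" and bot_Ppos: "({},y) \<in> Ppos D x y"
  using decorated_D unfolding Ppos_def decorated_def leq_def by auto

lemma Z2s_eq_qcirc: "Z2s = qcirc A'"
proof -
  have Z2s: "Z2s \<in> circles D' A'" using Z2s_circle Z2s_ne_Z1 circles_without_A1[of A'] unfolding A'_def by auto
  obtain r where r: "r \<in> A1" "(r,True) \<in> Z2s" using Z2s_meets_A1 unfolding on_circle_def by blast
  then have "r \<noteq> p" using circles_D'_disjoint_Z1[OF _ Z2s] pT_in_Z1 by blast
  then have "r = q" using r(1) A1_eq by blast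
  then show ?thesis using circle_eq_component[OF Z2s] r(2) unfolding qcirc_def by blast
qed

lemma Z1s_eq_merged: "Z1s = qcirc A' \<union> Z1"
proof -
  have "(p,True) \<in> Z1s" using Z1s_dual A1_eq unfolding dual_arc_circle_def by blast
  then have "Z1s = component_of (sedges D (insert A1 A')) (p,True)"
    using circle_eq_component Z1s_circle arcs_eq by metis
  then show ?thesis using component_p_with_A1[of A'] by simp
qed

lemma x'_qcirc: "x' (qcirc A') = (if y Z1 = xplus then x (qcirc A' \<union> Z1) else xplus)"
  unfolding x'_def using qcirc_in_circles Z2s_eq_qcirc Z1s_eq_merged by simp

lemma Ppos'_admissible:
  assumes "e \<in> Ppos D' x' y'"
  shows "admissible' e"
proof -
  have l1: "leq D' ({},y') e" and l2: "leq D' e (A',x')" using assms unfolding Ppos_def by auto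
  have "y' \<in> extensional (circles D' {})" unfolding y'_def by (rule restrict_extensional)
  then have wf: "fst e \<subseteq> A' \<and> snd e \<in> extensional (circles D' (fst e))"
    using leq_wf_labelled[OF l1] by simp
  have "snd e (qcirc (fst e)) = xplus" if "y Z1 = xminus"
  proof (rule ccontr)
    assume "snd e (qcirc (fst e)) \<noteq> xplus"
    then have "snd e (qcirc (fst e)) = xminus" by (simp add: lab_neq_iff)
    then have "x' (qcirc A') = xminus"
      using leq_keeps_xminus[OF l2, of "(q,True)"] q_in_pts_D' unfolding qcirc_def by simp
    then show False using x'_qcirc that by simp
  qed
  with wf show ?thesis unfolding admissible'_def by blast
qed

lemma proj_top: "proj (arcs D, x) = ((A', x'), True)"
proof -
  have A': "arcs D - {A1} = A'" unfolding A'_def ..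
  define v where "v = (if y Z1 = xplus then x (qcirc A' \<union> Z1) else xplus)"
  have "restrict (x(qcirc A' := v)) (circles D' A') = x'"
    unfolding x'_def v_def using Z2s_eq_qcirc Z1s_eq_merged by (auto simp: restrict_def)
  moreover have "proj (arcs D, x) = ((A', restrict (x(qcirc A' := v)) (circles D' A')), True)"
    unfolding proj_def fst_conv snd_conv A' v_def[symmetric] using A1_arc by simp
  ultimately show ?thesis by simp
qed

lemma proj_bot: "proj ({}, y) = (({}, y'), False)"
  unfolding proj_def y'_def by simp

lemma admissible_merged:
  assumes "admissible (B,l)" "A1 \<in> B" "y Z1 \<noteq> xplus"
  shows "l (qcirc (B - {A1}) \<union> Z1) = xminus"
proof -
  have "B - {A1} \<subseteq> A'" using assms(1) unfolding admissible_def A'_def by auto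
  moreover have "B = insert A1 (B - {A1})" using assms(2) by blast
  ultimately have "component_of (sedges D B) (p,True) = qcirc (B - {A1}) \<union> Z1"
    using component_p_with_A1 by metis
  moreover have "y Z1 = xminus" using assms(3) by (simp add: lab_neq_iff)
  ultimately show ?thesis using assms(1) unfolding admissible_def by simp
qed

lemma labels_corr_proj:
  assumes "admissible (B,l)" "A1 \<in> B"
  shows "labels_corr (B - {A1}) l (snd (fst (proj (B,l))))"
proof -
  define B0 where "B0 = B - {A1}"
  have ext: "l \<in> extensional (circles D B)" using assms unfolding admissible_def by auto
  have BB: "insert A1 B0 = B" using assms(2) unfolding B0_def by blast
  define v where "v = (if y Z1 = xplus then l (qcirc B0 \<union> Z1) else xplus)"
  have proj: "snd (fst (proj (B,l))) = restrict (l(qcirc B0 := v)) (circles D' B0)"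
    unfolding proj_def v_def B0_def using assms(2) by simp
  have "y Z1 \<noteq> xplus \<Longrightarrow> l (qcirc B0 \<union> Z1) = xminus"
    using admissible_merged[OF assms] unfolding B0_def by simp
  then show ?thesis
    unfolding labels_corr_def proj B0_def[symmetric] BB using ext qcirc_in_circles unfolding v_def by auto
qed

lemma labels_corr_lift:
  assumes "admissible' (B,l')"
  shows "labels_corr B (snd (lift ((B,l'),True))) l'"
proof -
  have B: "B \<subseteq> A'" and ext: "l' \<in> extensional (circles D' B)"
    and minus: "y Z1 = xminus \<longrightarrow> l' (qcirc B) = xplus"
    using assms unfolding admissible'_def by auto
  define M where "M = qcirc B \<union> Z1"
  define w where "w = (if y Z1 = xplus then l' (qcirc B) else xminus)"
  define L where "L = (l'(qcirc B := undefined))(M := w)"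
  have lift: "snd (lift ((B,l'),True)) = L" unfolding lift_def L_def M_def w_def by simp
  have "M \<noteq> qcirc B" unfolding M_def using merged_ne_qcirc[OF B] .
  have "M \<notin> circles D' B" unfolding M_def using merged_notin_circles_D'[OF B] .
  have "L \<in> extensional (circles D (insert A1 B))"
    unfolding circles_with_A1[OF B] extensional_def L_def using extensional_arb[OF ext] M_def by auto
  moreover have "\<forall>C\<in>circles D' B. C \<noteq> qcirc B \<longrightarrow> l' C = L C"
    unfolding L_def using \<open>M \<notin> circles D' B\<close> by auto
  moreover have "if y Z1 = xplus then l' (qcirc B) = L (qcirc B \<union> Z1)
      else l' (qcirc B) = xplus \<and> L (qcirc B \<union> Z1) = xminus"
    unfolding L_def w_def M_def using minus by (auto simp: lab_neq_iff)
  ultimately show ?thesis unfolding labels_corr_def lift using ext by blast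
qed

lemma lift_proj_with_A1:
  assumes "admissible (B,l)" "A1 \<in> B"
  shows "lift (proj (B,l)) = (B,l)"
proof -
  define B0 where "B0 = B - {A1}"
  have B0: "B0 \<subseteq> A'" using assms unfolding admissible_def B0_def A'_def by auto
  have ext: "l \<in> extensional (circles D B)" using assms(1) unfolding admissible_def by simp
  have BB: "insert A1 B0 = B" using assms(2) unfolding B0_def by blast
  define M where "M = qcirc B0 \<union> Z1"
  define v where "v = (if y Z1 = xplus then l M else xplus)"
  define L0 where "L0 = restrict (l(qcirc B0 := v)) (circles D' B0)"
  have proj: "proj (B,l) = ((B0, L0), True)"
    unfolding proj_def L0_def v_def M_def B0_def using assms(2) by simp
  have "L0 (qcirc B0) = v" unfolding L0_def using qcirc_in_circles by simp
  then have label_M: "(if y Z1 = xplus then L0 (qcirc B0) else xminus) = l M"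
    using admissible_merged[OF assms] unfolding v_def M_def B0_def by auto
  have "M \<notin> circles D' B0" unfolding M_def using merged_notin_circles_D'[OF B0] .
  have circles: "circles D B = insert M (circles D' B0 - {qcirc B0})"
    using circles_with_A1[OF B0] BB unfolding M_def by simp
  have "(L0(qcirc B0 := undefined))(M := l M) = l"
  proof
    fix C
    show "((L0(qcirc B0 := undefined))(M := l M)) C = l C"
    proof (cases "C = M")
      case False
      then show ?thesis
        using extensional_arb[OF ext, of C] circles unfolding L0_def by (cases "C = qcirc B0") auto
    qed simp
  qed
  moreover have "lift (proj (B,l)) = (insert A1 B0,
      (L0(qcirc B0 := undefined))(M := (if y Z1 = xplus then L0 (qcirc B0) else xminus)))"
    unfolding proj lift_def M_def by simp
  ultimately show ?thesis using BB label_M by simp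
qed

lemma lift_proj:
  assumes "admissible e"
  shows "lift (proj e) = e"
proof -
  obtain B l where e: "e = (B,l)" by (cases e)
  show ?thesis
  proof (cases "A1 \<in> B")
    case True
    then show ?thesis using lift_proj_with_A1 assms unfolding e by blast
  next
    case False
    then have B: "B \<subseteq> A'" and ext: "l \<in> extensional (circles D B)" and "l Z1 = y Z1"
      using assms unfolding admissible_def e A'_def by auto
    then have "(restrict l (circles D' B))(Z1 := y Z1) = l"
      using extensional_arb[OF ext] circles_without_A1[OF B] by (auto simp: restrict_def)
    then show ?thesis unfolding e proj_def lift_def using False by simp
  qed
qed

lemma proj_lift:
  assumes "admissible' (B,l')"
  shows "proj (lift ((B,l'),b)) = ((B,l'),b)"
proof -
  have B: "B \<subseteq> A'" and ext: "l' \<in> extensional (circles D' B)"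
    and minus: "y Z1 = xminus \<longrightarrow> l' (qcirc B) = xplus"
    using assms unfolding admissible'_def by auto
  have A1B: "A1 \<notin> B" using B unfolding A'_def by blast
  show ?thesis
  proof (cases b)
    case False
    have "restrict (l'(Z1 := y Z1)) (circles D' B) = l'"
      using Z1_notin_circles_D'[OF B] extensional_arb[OF ext] by (auto simp: restrict_def)
    then show ?thesis unfolding lift_def proj_def using False A1B by simp
  next
    case True
    define M where "M = qcirc B \<union> Z1"
    define L where "L = (l'(qcirc B := undefined))(M := (if y Z1 = xplus then l' (qcirc B) else xminus))"
    have lift: "lift ((B,l'),b) = (insert A1 B, L)" unfolding lift_def L_def M_def using True by simp
    have BB: "insert A1 B - {A1} = B" using A1B by blast
    have "M \<notin> circles D' B" unfolding M_def using merged_notin_circles_D'[OF B] .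
    then have "restrict (L(qcirc B := l' (qcirc B))) (circles D' B) = l'"
      using extensional_arb[OF ext] unfolding L_def by (auto simp: restrict_def)
    moreover have "(if y Z1 = xplus then L M else xplus) = l' (qcirc B)"
      unfolding L_def using minus by (auto simp: lab_neq_iff)
    moreover have "proj (insert A1 B, L) =
        ((B, restrict (L(qcirc B := (if y Z1 = xplus then L M else xplus))) (circles D' B)), True)"
      unfolding proj_def BB M_def using A1B by simp
    ultimately show ?thesis unfolding lift using True by simp
  qed
qed

lemma proj_step_with_A1:
  assumes "admissible (B,l)" "admissible (B2,l2)" "step D (B,l) (B2,l2)" "A1 \<in> B"
  shows "snd (proj (B,l)) \<and> snd (proj (B2,l2)) \<and> step D' (fst (proj (B,l))) (fst (proj (B2,l2)))"
proof -
  from assms(3) obtain A where A: "A \<in> arcs D" "A \<notin> B" "B2 = insert A B" and "B \<subseteq> arcs D"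
    unfolding step_Pair_iff by blast
  define B0 where "B0 = B - {A1}"
  have B0: "B0 \<subseteq> A'" using \<open>B \<subseteq> arcs D\<close> unfolding B0_def A'_def by blast
  have AB0: "A \<in> A'" "A \<notin> B0" using A assms(4) unfolding A'_def B0_def by auto
  have BB: "B = insert A1 B0" using assms(4) unfolding B0_def by blast
  have BB2: "B2 - {A1} = insert A B0" using A(3) AB0 assms(4) unfolding B0_def A'_def by auto
  have p1: "proj (B,l) = ((B0, snd (fst (proj (B,l)))), True)"
    unfolding proj_def B0_def using assms(4) by simp
  have p2: "proj (B2,l2) = ((insert A B0, snd (fst (proj (B2,l2)))), True)"
    unfolding proj_def BB2[symmetric] using assms(4) A(3) by simp
  have "labels_corr B0 l (snd (fst (proj (B,l))))"
    using labels_corr_proj[OF assms(1,4)] unfolding B0_def .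
  moreover have "labels_corr (insert A B0) l2 (snd (fst (proj (B2,l2))))"
    using labels_corr_proj[OF assms(2)] assms(4) A(3) BB2 by simp
  moreover have "step D (insert A1 B0, l) (insert A (insert A1 B0), l2)"
    using assms(3) unfolding A(3) BB by simp
  ultimately have "step D' (B0, snd (fst (proj (B,l)))) (insert A B0, snd (fst (proj (B2,l2))))"
    using step_with_A1_iff[OF B0 AB0] by blast
  then show ?thesis using p1 p2 by (metis fst_conv snd_conv)
qed

lemma proj_step_without_A1:
  assumes "admissible (B,l)" "admissible (B2,l2)" "step D (B,l) (B2,l2)" "A1 \<notin> B2"
  shows "\<not> snd (proj (B,l)) \<and> \<not> snd (proj (B2,l2)) \<and> step D' (fst (proj (B,l))) (fst (proj (B2,l2)))"
proof -
  from assms(3) obtain A where A: "A \<in> arcs D" "A \<notin> B" "B2 = insert A B"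
    and ext: "l \<in> extensional (circles D B)" "l2 \<in> extensional (circles D B2)" "B \<subseteq> arcs D"
    unfolding step_Pair_iff by blast
  have B: "B \<subseteq> A'" and AA': "A \<in> A'" using ext(3) A assms(4) unfolding A'_def by auto
  have "l Z1 = l2 Z1" using assms(1,2,4) A(3) unfolding admissible_def by simp
  then have "step D (B,l) (insert A B,l2) \<longleftrightarrow>
      step D' (B, restrict l (circles D' B)) (insert A B, restrict l2 (circles D' (insert A B)))"
    using step_without_A1_iff[OF B AA' A(2), of l l2 "restrict l (circles D' B)"
        "restrict l2 (circles D' (insert A B))"] ext A(3) by simp
  then have "step D' (B, restrict l (circles D' B)) (insert A B, restrict l2 (circles D' (insert A B)))"
    using assms(3) A(3) by simp
  then show ?thesis unfolding proj_def using assms(4) A(3) by simp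
qed

lemma proj_step_A1:
  assumes "admissible (B,l)" "admissible (B2,l2)" "step D (B,l) (B2,l2)" "A1 \<notin> B" "A1 \<in> B2"
  shows "\<not> snd (proj (B,l)) \<and> snd (proj (B2,l2)) \<and> fst (proj (B,l)) = fst (proj (B2,l2))"
proof -
  from assms(3) obtain A where A: "A \<notin> B" "B2 = insert A B"
    and ext: "l \<in> extensional (circles D B)" "B \<subseteq> arcs D"
    unfolding step_Pair_iff by blast
  have B: "B \<subseteq> A'" using ext(2) assms(4) unfolding A'_def by blast
  have B2: "B2 = insert A1 B" "B2 - {A1} = B" using A assms(4,5) by auto
  obtain l' where p2: "proj (B2,l2) = ((B, l'), True)"
    unfolding proj_def using assms(5) B2(2) by simp
  have c2: "labels_corr B l2 l'" using labels_corr_proj[OF assms(2,5)] p2 B2(2) by simp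
  have "l Z1 = y Z1" using assms(1,4) unfolding admissible_def by simp
  then have "\<forall>C\<in>circles D' B. l C = l' C"
    using step_A1_iff[OF B ext(1) _ c2] assms(3) unfolding B2(1) by simp
  moreover have "l' \<in> extensional (circles D' B)" using c2 unfolding labels_corr_def by blast
  ultimately have "restrict l (circles D' B) = l'"
    by (intro extensionalityI[OF restrict_extensional]) simp_all
  moreover have "proj (B,l) = ((B, restrict l (circles D' B)), False)"
    unfolding proj_def using assms(4) by simp
  ultimately show ?thesis using p2 by simp
qed

lemma proj_step:
  assumes "admissible e1" "admissible e2" "step D e1 e2"
  shows "(snd (proj e1) = snd (proj e2) \<and> step D' (fst (proj e1)) (fst (proj e2))) \<or>
    (\<not> snd (proj e1) \<and> snd (proj e2) \<and> fst (proj e1) = fst (proj e2))"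
proof -
  obtain B l B2 l2 where e: "e1 = (B,l)" "e2 = (B2,l2)" by (cases e1; cases e2)
  show ?thesis
  proof (cases "A1 \<in> B")
    case True
    then show ?thesis using proj_step_with_A1[OF assms[unfolded e]] unfolding e by simp
  next
    case False
    then show ?thesis
      using proj_step_A1[OF assms[unfolded e] False] proj_step_without_A1[OF assms[unfolded e]]
      unfolding e by (cases "A1 \<in> B2") simp_all
  qed
qed

lemma lift_step:
  assumes "admissible' e1" "admissible' e2" "step D' e1 e2"
  shows "step D (lift (e1,b)) (lift (e2,b))"
proof -
  obtain B l B2 l2 where e: "e1 = (B,l)" "e2 = (B2,l2)" by (cases e1; cases e2)
  from assms(3) obtain A where A: "A \<in> A'" "A \<notin> B" "B2 = insert A B"
    and ext: "l \<in> extensional (circles D' B)" "l2 \<in> extensional (circles D' B2)" "B \<subseteq> A'"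
    unfolding e step_Pair_iff by auto
  show ?thesis
  proof (cases b)
    case False
    have B2: "insert A B \<subseteq> A'" using A ext(3) by blast
    have "l(Z1 := y Z1) \<in> extensional (circles D B)"
      using ext(1) circles_without_A1[OF ext(3)] unfolding extensional_def by auto
    moreover have "l2(Z1 := y Z1) \<in> extensional (circles D (insert A B))"
      using ext(2) circles_without_A1[OF B2] A(3) unfolding extensional_def by auto
    ultimately have "step D (B, l(Z1 := y Z1)) (insert A B, l2(Z1 := y Z1)) \<longleftrightarrow> step D' (B,l) (insert A B, l2)"
      using step_without_A1_iff[OF ext(3) A(1,2) _ _ ext(1) ext(2)[unfolded A(3)]]
        Z1_notin_circles_D'[OF ext(3)] Z1_notin_circles_D'[OF B2] by auto
    then show ?thesis using assms(3) False unfolding e A(3) lift_def by simp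
  next
    case True
    have "labels_corr B (snd (lift ((B,l),True))) l"
      and "labels_corr (insert A B) (snd (lift ((insert A B,l2),True))) l2"
      using labels_corr_lift assms(1,2) unfolding e A(3) by blast+
    from step_with_A1_iff[OF ext(3) A(1,2) this] assms(3)
    have "step D (insert A1 B, snd (lift ((B,l),True)))
        (insert A (insert A1 B), snd (lift ((insert A B,l2),True)))"
      unfolding e A(3) by simp
    moreover have "lift (e1,b) = (insert A1 B, snd (lift ((B,l),True)))"
      "lift (e2,b) = (insert A (insert A1 B), snd (lift ((insert A B,l2),True)))"
      unfolding e A(3) lift_def using True by auto
    ultimately show ?thesis by simp
  qed
qed

lemma lift_step_A1:
  assumes "admissible' e"
  shows "step D (lift (e,False)) (lift (e,True))"
proof -
  obtain B l where e: "e = (B,l)" by (cases e)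
  have B: "B \<subseteq> A'" and ext: "l \<in> extensional (circles D' B)"
    using assms unfolding admissible'_def e by auto
  have "l(Z1 := y Z1) \<in> extensional (circles D B)"
    using ext circles_without_A1[OF B] unfolding extensional_def by auto
  moreover have "\<forall>C\<in>circles D' B. (l(Z1 := y Z1)) C = l C" using Z1_notin_circles_D'[OF B] by auto
  ultimately show ?thesis
    using step_A1_iff[OF B _ _ labels_corr_lift[OF assms[unfolded e]]] unfolding e lift_def by simp
qed

lemma leq_proj:
  assumes "leq D a e" "a \<in> Ppos D x y" "e \<in> Ppos D x y"
  shows "leq D' (fst (proj a)) (fst (proj e)) \<and> snd (proj a) \<le> snd (proj e)"
proof -
  have "(step D)\<^sup>*\<^sup>* a e \<Longrightarrow> e \<in> Ppos D x y \<Longrightarrow>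
    leq D' (fst (proj a)) (fst (proj e)) \<and> snd (proj a) \<le> snd (proj e)"
  proof (induction rule: rtranclp_induct)
    case base
    then show ?case unfolding leq_def by simp
  next
    case (step e1 e2)
    have e1: "e1 \<in> Ppos D x y" using Ppos_step_closed[OF assms(2) step.prems] step.hyps unfolding leq_def by blast
    with step.IH have IH: "leq D' (fst (proj a)) (fst (proj e1))" "snd (proj a) \<le> snd (proj e1)" by auto
    from proj_step[OF Ppos_admissible[OF e1] Ppos_admissible[OF step.prems] step.hyps(2)]
    show ?case
    proof
      assume "snd (proj e1) = snd (proj e2) \<and> step D' (fst (proj e1)) (fst (proj e2))"
      with IH show ?case unfolding leq_def by (auto intro: rtranclp.rtrancl_into_rtrancl)
    next
      assume "\<not> snd (proj e1) \<and> snd (proj e2) \<and> fst (proj e1) = fst (proj e2)"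
      with IH show ?case by auto
    qed
  qed
  then show ?thesis using assms unfolding leq_def by blast
qed

lemma leq_lift_same:
  assumes "leq D' a e" "a \<in> Ppos D' x' y'" "e \<in> Ppos D' x' y'"
  shows "leq D (lift (a,b)) (lift (e,b))"
proof -
  have "(step D')\<^sup>*\<^sup>* a e \<Longrightarrow> e \<in> Ppos D' x' y' \<Longrightarrow> leq D (lift (a,b)) (lift (e,b))"
  proof (induction rule: rtranclp_induct)
    case base
    then show ?case unfolding leq_def by simp
  next
    case (step e1 e2)
    have e1: "e1 \<in> Ppos D' x' y'"
      using Ppos_step_closed[OF assms(2) step.prems] step.hyps unfolding leq_def by blast
    have "step D (lift (e1,b)) (lift (e2,b))"
      using lift_step[OF Ppos'_admissible[OF e1] Ppos'_admissible[OF step.prems] step.hyps(2)] .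
    then show ?case using step.IH[OF e1] unfolding leq_def by (metis rtranclp.rtrancl_into_rtrancl)
  qed
  then show ?thesis using assms unfolding leq_def by blast
qed

lemma leq_lift:
  assumes "fst t1 \<in> Ppos D' x' y'" "fst t2 \<in> Ppos D' x' y'" "leq D' (fst t1) (fst t2)" "snd t1 \<le> snd t2"
  shows "leq D (lift t1) (lift t2)"
proof -
  obtain a1 b1 a2 b2 where t: "t1 = (a1,b1)" "t2 = (a2,b2)" by (cases t1; cases t2)
  have a: "a1 \<in> Ppos D' x' y'" "a2 \<in> Ppos D' x' y'" "leq D' a1 a2" "b1 \<le> b2"
    using assms unfolding t by auto
  show ?thesis
  proof (cases "b1 = b2")
    case True
    then show ?thesis using leq_lift_same[OF a(3,1,2), of b1] unfolding t by simp
  next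
    case False
    then have "\<not> b1" "b2" using a(4) by auto
    have "step D (lift (a1,False)) (lift (a1,True))" using lift_step_A1 Ppos'_admissible[OF a(1)] by blast
    moreover have "leq D (lift (a1,True)) (lift (a2,True))" using leq_lift_same[OF a(3,1,2)] .
    ultimately have "leq D (lift (a1,False)) (lift (a2,True))"
      unfolding leq_def by (rule converse_rtranclp_into_rtranclp)
    then show ?thesis using \<open>\<not> b1\<close> \<open>b2\<close> unfolding t by simp
  qed
qed

lemma leq_bot_top_D': "leq D' ({},y') (A',x')"
  using leq_proj[OF _ bot_Ppos top_Ppos] decorated_D proj_top proj_bot unfolding decorated_def by simp

lemma decorated_D': "decorated D' x' y'"
  unfolding decorated_def y'_def x'_def using wf_D' leq_bot_top_D' y'_def x'_def by simp

lemma proj_Ppos: "e \<in> Ppos D x y \<Longrightarrow> proj e \<in> Ppos D' x' y' \<times> UNIV"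
  using leq_proj[OF _ bot_Ppos] leq_proj[OF _ _ top_Ppos] proj_top proj_bot
  unfolding Ppos_def by (auto simp: mem_Times_iff)

lemma lift_Ppos:
  assumes "t \<in> Ppos D' x' y' \<times> UNIV"
  shows "lift t \<in> Ppos D x y"
proof -
  have bot': "({},y') \<in> Ppos D' x' y'" and top': "(A',x') \<in> Ppos D' x' y'"
    using leq_bot_top_D' unfolding Ppos_def leq_def by auto
  have "lift (({},y'),False) = ({},y)" using lift_proj[OF admissible_bot] proj_bot by simp
  moreover have "lift ((A',x'),True) = (arcs D,x)"
    using lift_proj[OF Ppos_admissible[OF top_Ppos]] proj_top by simp
  moreover have "leq D (lift (({},y'),False)) (lift t)" "leq D (lift t) (lift ((A',x'),True))"
    using leq_lift[of "(({},y'),False)" t] leq_lift[of t "((A',x'),True)"] assms bot' top'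
    unfolding Ppos_def by auto
  ultimately show ?thesis unfolding Ppos_def by simp
qed

lemma Ppos_order_iso:
  "order_iso_betw (leq D) (Ppos D x y) (\<lambda>a b. leq D' (fst a) (fst b) \<and> snd a \<le> snd b)
     (Ppos D' x' y' \<times> UNIV) proj"
  unfolding order_iso_betw_def
proof
  show "bij_betw proj (Ppos D x y) (Ppos D' x' y' \<times> UNIV)"
  proof (rule bij_betw_byWitness[where f'=lift])
    show "\<forall>a\<in>Ppos D x y. lift (proj a) = a" using lift_proj Ppos_admissible by blast
    show "\<forall>t\<in>Ppos D' x' y' \<times> UNIV. proj (lift t) = t"
      using proj_lift Ppos'_admissible by (metis mem_Times_iff prod.collapse)
    show "proj ` Ppos D x y \<subseteq> Ppos D' x' y' \<times> UNIV" using proj_Ppos by blast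
    show "lift ` (Ppos D' x' y' \<times> UNIV) \<subseteq> Ppos D x y" using lift_Ppos by blast
  qed
  show "\<forall>a\<in>Ppos D x y. \<forall>b\<in>Ppos D x y.
      leq D a b \<longleftrightarrow> leq D' (fst (proj a)) (fst (proj b)) \<and> snd (proj a) \<le> snd (proj b)"
  proof (intro ballI iffI)
    fix a b assume a: "a \<in> Ppos D x y" and b: "b \<in> Ppos D x y"
    show "leq D' (fst (proj a)) (fst (proj b)) \<and> snd (proj a) \<le> snd (proj b)" if "leq D a b"
      using leq_proj that a b by blast
    show "leq D a b" if "leq D' (fst (proj a)) (fst (proj b)) \<and> snd (proj a) \<le> snd (proj b)"
    proof -
      have "fst (proj a) \<in> Ppos D' x' y'" "fst (proj b) \<in> Ppos D' x' y'"
        using proj_Ppos a b by (auto simp: mem_Times_iff)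
      then have "leq D (lift (proj a)) (lift (proj b))" using leq_lift that by blast
      then show "leq D a b" using lift_proj Ppos_admissible a b by metis
    qed
  qed
qed

end

theorem mainTheorem4:
  fixes D :: "'p rconf" and x y :: "'p node set \<Rightarrow> lab"
    and Z1 Z1s Z2s :: "'p node set" and A1 :: "'p set" and p q :: 'p
  assumes "decorated D x y"
    and "leaf D Z1"
    and "A1 \<in> arcs D" and "A1 = {p, q}" and "on_circle p Z1"
    and "Z1s \<in> circles D (arcs D)" and "dual_arc_circle A1 Z1s"
    and "Z2s \<in> circles D (arcs D - {A1})" and "Z2s \<noteq> Z1" and "\<exists>r\<in>A1. on_circle r Z2s"
  shows "let D' = delete_circ_arc D Z1 A1;
             y' = restrict y (circles D' {});
             x' = restrict (\<lambda>C. if C = Z2s then (if y Z1 = xplus then x Z1s else xplus) else x C)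
                           (circles D' (arcs D'))
         in decorated D' x' y' \<and>
            (\<exists>f. order_iso_betw (leq D) (Ppos D x y)
                   (\<lambda>a b. leq D' (fst a) (fst b) \<and> snd a \<le> snd b)
                   (Ppos D' x' y' \<times> (UNIV :: bool set)) f)"
proof -
  interpret leaf_deletion D x y Z1 Z1s Z2s A1 p q
    using assms by unfold_locales
  show ?thesis
    using decorated_D' Ppos_order_iso unfolding Let_def D'_def x'_def y'_def by blast
qed

end
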